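(* Let $X$ be a $K$-convex Banach space, let $p\in(1,\infty)$, and let $\alpha\in(0,1]$ be such that $$\sup_{n\ge 1}\ \sup_{z\in A_\alpha}\big\|e^{-z\Delta}\big\|_{L^p(\Omega_n;X)\to L^p(\Omega_n;X)}<\infty,\qquad A_\alpha:=\{z\in\mathbb{C}: |\arg z|\le \tfrac{\alpha\pi}{2}\}.$$ Then there is a constant $c(p,X)>0$ such that for all $n$, all $d<n$ and every $f\in\mathcal{T}_d(X)$, $$\|\Delta f\|_{L^p(\Omega_n;X)}\ge c(p,X)\, d^{\alpha}\,\|f\|_{L^p(\Omega_n;X)}.$$
   Context: $\Omega_n=\{-1,1\}^n$ is the Hamming cube with the uniform probability measure, and $L^p(\Omega_n;X)$ is the Bochner space of $X$-valued functions on it. Every $f:\Omega_n\to X$ has the Walsh expansion $f=\sum_{S\subseteq\{1,\dots,n\}}\hat f(S)\varepsilon^S$ with $\hat f(S)\in X$ and $\varepsilon^S=\prod_{i\in S}\varepsilon_i$. The operator $\Delta$ acts by $\Delta f=\sum_S |S|\hat f(S)\varepsilon^S$, and $e^{-z\Delta}f=\sum_S e^{-z|S|}\hat f(S)\varepsilon^S$ for $z\in\mathbb{C}$. The tail space is $\mathcal{T}_d(X)=\{f:\ \hat f(S)=0 \text{ whenever } |S|\le d\}$. (By a theorem of Pisier, for $K$-convex $X$ and $p\in(1,\infty)$ such an $\alpha$ exists.) *)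

theory Defs
  imports "HOL-Analysis.Analysis"
begin

text \<open>Points of the Hamming cube {-1,1}^n are encoded as subsets A of {..<n}:
  A is the set of coordinates i with epsilon_i = -1.  Functions on the cube are
  functions f :: nat set => 'a (only values on Pow {..<n} matter).\<close>

definition walsh :: "nat set \<Rightarrow> nat set \<Rightarrow> real" where
  "walsh S A = (-1) ^ card (S \<inter> A)"

definition fourier :: "nat \<Rightarrow> (nat set \<Rightarrow> 'a::real_vector) \<Rightarrow> nat set \<Rightarrow> 'a" where
  "fourier n f S = (1 / 2 ^ n) *\<^sub>R (\<Sum>A\<in>Pow {..<n}. walsh S A *\<^sub>R f A)"

definition lpnorm :: "real \<Rightarrow> nat \<Rightarrow> (nat set \<Rightarrow> 'a::real_normed_vector) \<Rightarrow> real" where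
  "lpnorm p n f = ((\<Sum>A\<in>Pow {..<n}. norm (f A) powr p) / 2 ^ n) powr (1 / p)"

definition hDelta :: "nat \<Rightarrow> (nat set \<Rightarrow> 'a::real_vector) \<Rightarrow> nat set \<Rightarrow> 'a" where
  "hDelta n f = (\<lambda>A. \<Sum>S\<in>Pow {..<n}. (real (card S) * walsh S A) *\<^sub>R fourier n f S)"

definition rad :: "nat \<Rightarrow> (nat set \<Rightarrow> 'a::real_vector) \<Rightarrow> nat set \<Rightarrow> 'a" where
  "rad n f = (\<lambda>A. \<Sum>i<n. walsh {i} A *\<^sub>R fourier n f {i})"

definition K_convex :: "'a::real_normed_vector itself \<Rightarrow> bool" where
  "K_convex _ \<longleftrightarrow> (\<exists>C. \<forall>n (f :: nat set \<Rightarrow> 'a). lpnorm 2 n (rad n f) \<le> C * lpnorm 2 n f)"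

text \<open>A complex Banach space is encoded as a real Banach space together with a
  complex structure J (multiplication by i) compatible with the norm.\<close>
definition complex_structure :: "('a::real_normed_vector \<Rightarrow> 'a) \<Rightarrow> bool" where
  "complex_structure J \<longleftrightarrow> linear J \<and> (\<forall>x. J (J x) = - x) \<and>
     (\<forall>t x. norm (cos t *\<^sub>R x + sin t *\<^sub>R J x) = norm x)"

definition cmult :: "('a::real_vector \<Rightarrow> 'a) \<Rightarrow> complex \<Rightarrow> 'a \<Rightarrow> 'a" where
  "cmult J c x = Re c *\<^sub>R x + Im c *\<^sub>R J x"

definition heat :: "('a::real_vector \<Rightarrow> 'a) \<Rightarrow> nat \<Rightarrow> complex \<Rightarrow> (nat set \<Rightarrow> 'a) \<Rightarrow> nat set \<Rightarrow> 'a" where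
  "heat J n z f = (\<lambda>A. \<Sum>S\<in>Pow {..<n}.
      cmult J (exp (- z * of_nat (card S))) (walsh S A *\<^sub>R fourier n f S))"

definition sector :: "real \<Rightarrow> complex set" where
  "sector \<alpha> = {z. \<bar>Arg z\<bar> \<le> \<alpha> * pi / 2}"

definition tail_space :: "nat \<Rightarrow> nat \<Rightarrow> (nat set \<Rightarrow> 'a::real_vector) \<Rightarrow> bool" where
  "tail_space n d f \<longleftrightarrow> (\<forall>S\<subseteq>{..<n}. card S \<le> d \<longrightarrow> fourier n f S = 0)"

end

(*
  Write f = \<integral>\<^sub>0\<^sup>T e\<^sup>-\<^sup>t\<^sup>\<Delta> \<Delta>f dt + e\<^sup>-\<^sup>T\<^sup>\<Delta> f. For g in the tail space, Cauchy's formula over a triangle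
  inside the sector, with kernel exp (\<lambda> z\<^sup>1\<^sup>/\<^sup>\<alpha>) (2t / (z + t))\<^sup>2, gives
  \<parallel>e\<^sup>-\<^sup>t\<^sup>\<Delta> g\<parallel> \<le> C M \<parallel>g\<parallel> exp (- \<kappa> (d + 1) t\<^sup>1\<^sup>/\<^sup>\<alpha>) for 0 \<le> t \<le> T. On the sides of the triangle along the
  boundary of the sector the kernel provides this decay; on the far side, e\<^sup>-\<^sup>z\<^sup>\<Delta> g itself is small,
  because each homogeneous part of g is an average of values e\<^sup>-\<^sup>z\<^sup>\<Delta> g over points of the sector and
  only the parts of degree > d occur. Integrating the decay in t bounds the first term by
  C' (d + 1)\<^sup>-\<^sup>\<alpha> \<parallel>\<Delta>f\<parallel>, and a large fixed T makes the second term at most \<parallel>f\<parallel> / 2.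
*)

theory Submission
  imports Defs "HOL-Complex_Analysis.Complex_Analysis"
begin

section \<open>Walsh expansion\<close>

lemma walsh_commute: "walsh S A = walsh A S"
  by (simp add: walsh_def Int_commute)

lemma walsh_mult_self: "walsh S A * walsh S A = 1"
  by (simp add: walsh_def flip: power_add)

lemma sum_walsh_eq_0:
  assumes "finite N" "i \<in> U" "U \<subseteq> N"
  shows "(\<Sum>A\<in>Pow N. walsh U A) = 0"
proof -
  define N' where "N' = N - {i}"
  have N: "N = insert i N'" "i \<notin> N'" "finite N'" using assms by (auto simp: N'_def)
  have inj: "inj_on (insert i) (Pow N')" using N(2) unfolding inj_on_def by (metis PowD insert_ident subsetD)
  have flip: "walsh U (insert i A) = - walsh U A" if "A \<in> Pow N'" for A
  proof -
    have "U \<inter> insert i A = insert i (U \<inter> A)" "i \<notin> U \<inter> A" "finite (U \<inter> A)"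
      using that N assms(2) finite_subset by auto
    then show ?thesis by (simp add: walsh_def)
  qed
  have "(\<Sum>A\<in>Pow N. walsh U A) = (\<Sum>A\<in>Pow N'. walsh U A) + (\<Sum>A\<in>insert i ` Pow N'. walsh U A)"
    unfolding N(1) Pow_insert using N(2,3) by (subst sum.union_disjoint) auto
  also have "(\<Sum>A\<in>insert i ` Pow N'. walsh U A) = (\<Sum>A\<in>Pow N'. - walsh U A)"
    using inj flip by (simp add: sum.reindex)
  finally show ?thesis by (simp add: sum_negf)
qed

lemma walsh_mult:
  assumes "finite S" "finite T"
  shows "walsh S A * walsh T A = walsh (sym_diff S T) A"
proof -
  have card_split: "card (X \<inter> A) = card ((X - Y) \<inter> A) + card (X \<inter> Y \<inter> A)" if "finite X" for X Y
    using that by (subst card_Un_disjoint[symmetric]) (auto intro: arg_cong[where f=card])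
  have "card (((S - T) \<union> (T - S)) \<inter> A) = card ((S - T) \<inter> A) + card ((T - S) \<inter> A)"
    using assms by (subst card_Un_disjoint[symmetric]) (auto intro: arg_cong[where f=card])
  then have "card (S \<inter> A) + card (T \<inter> A) = card (((S - T) \<union> (T - S)) \<inter> A) + 2 * card (S \<inter> T \<inter> A)"
    using card_split[OF assms(1), of T] card_split[OF assms(2), of S] by (simp add: Int_commute Int_left_commute)
  then show ?thesis
    unfolding walsh_def power_add[symmetric] by (simp add: power_add power_mult)
qed

lemma walsh_orthogonal:
  assumes "S \<subseteq> {..<n}" "T \<subseteq> {..<n}"
  shows "(\<Sum>A\<in>Pow {..<n}. walsh S A * walsh T A) = (if S = T then 2 ^ n else 0)"
proof (cases "S = T")
  case True
  then show ?thesis by (simp add: walsh_mult_self card_Pow)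
next
  case False
  have fin: "finite S" "finite T" using assms finite_subset by blast+
  obtain i where i: "i \<in> (S - T) \<union> (T - S)" using False by blast
  have "(\<Sum>A\<in>Pow {..<n}. walsh S A * walsh T A) = (\<Sum>A\<in>Pow {..<n}. walsh ((S - T) \<union> (T - S)) A)"
    by (simp add: walsh_mult fin)
  also have "\<dots> = 0" by (rule sum_walsh_eq_0[OF _ i]) (use assms in auto)
  finally show ?thesis using False by simp
qed

lemma fourier_inversion:
  fixes f :: "nat set \<Rightarrow> 'a::real_vector"
  assumes "A \<subseteq> {..<n}"
  shows "(\<Sum>S\<in>Pow {..<n}. walsh S A *\<^sub>R fourier n f S) = f A"
proof -
  have "(\<Sum>S\<in>Pow {..<n}. walsh S A *\<^sub>R fourier n f S)
      = (1 / 2 ^ n) *\<^sub>R (\<Sum>S\<in>Pow {..<n}. \<Sum>B\<in>Pow {..<n}. (walsh S A * walsh S B) *\<^sub>R f B)"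
    by (simp add: fourier_def scaleR_sum_right)
  also have "\<dots> = (1 / 2 ^ n) *\<^sub>R (\<Sum>B\<in>Pow {..<n}. (\<Sum>S\<in>Pow {..<n}. walsh A S * walsh B S) *\<^sub>R f B)"
    by (subst sum.swap) (simp add: scaleR_sum_left walsh_commute)
  also have "\<dots> = (1 / 2 ^ n) *\<^sub>R (\<Sum>B\<in>Pow {..<n}. if A = B then 2 ^ n *\<^sub>R f B else 0)"
    using assms by (intro arg_cong[where f="scaleR _"] sum.cong) (auto simp: walsh_orthogonal)
  finally show ?thesis using assms by (simp add: sum.delta)
qed

lemma fourier_hDelta:
  fixes f :: "nat set \<Rightarrow> 'a::real_vector"
  assumes "S \<subseteq> {..<n}"
  shows "fourier n (hDelta n f) S = real (card S) *\<^sub>R fourier n f S"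
proof -
  have "fourier n (hDelta n f) S = (1 / 2 ^ n) *\<^sub>R
      (\<Sum>A\<in>Pow {..<n}. \<Sum>T\<in>Pow {..<n}. (walsh S A * (real (card T) * walsh T A)) *\<^sub>R fourier n f T)"
    unfolding fourier_def[of n "hDelta n f"] by (simp add: hDelta_def scaleR_sum_right mult.assoc)
  also have "\<dots> = (1 / 2 ^ n) *\<^sub>R
      (\<Sum>T\<in>Pow {..<n}. (real (card T) * (\<Sum>A\<in>Pow {..<n}. walsh S A * walsh T A)) *\<^sub>R fourier n f T)"
    by (subst sum.swap) (simp add: scaleR_sum_left sum_distrib_left mult.left_commute)
  also have "\<dots> = (1 / 2 ^ n) *\<^sub>R
      (\<Sum>T\<in>Pow {..<n}. if S = T then (real (card T) * 2 ^ n) *\<^sub>R fourier n f T else 0)"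
    using assms by (intro arg_cong[where f="scaleR _"] sum.cong) (auto simp: walsh_orthogonal)
  finally show ?thesis using assms by (simp add: sum.delta)
qed

section \<open>The \<open>L\<^sup>p\<close> norm on the cube\<close>

lemma Hoelder_sum_normalised:
  fixes v y :: "'i \<Rightarrow> real"
  assumes fin: "finite I" and p: "1 < p" and q: "1 < q" "1/p + 1/q = 1"
    and v: "\<forall>i\<in>I. 0 \<le> v i" and y: "\<forall>i\<in>I. 0 \<le> y i" and yq: "(\<Sum>i\<in>I. y i powr q) = 1"
  shows "(\<Sum>i\<in>I. v i * y i) \<le> (\<Sum>i\<in>I. v i powr p) powr (1/p)"
proof (cases "(\<Sum>i\<in>I. v i powr p) = 0")
  case True
  then have "\<forall>i\<in>I. v i = 0" using sum_nonneg_eq_0_iff[OF fin, of "\<lambda>i. v i powr p"] by auto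
  then show ?thesis by simp
next
  case False
  define Sv where "Sv = (\<Sum>i\<in>I. v i powr p)"
  have Sv: "Sv > 0" using False v unfolding Sv_def by (simp add: order_less_le sum_nonneg)
  define c where "c = Sv powr (1/p)"
  have c: "c > 0" "c powr p = Sv" using Sv p by (simp_all add: c_def powr_powr)
  have vc: "(v i / c) powr p = v i powr p / Sv" if "i \<in> I" for i
    using v that c by (simp add: powr_divide)
  have "(\<Sum>i\<in>I. (v i / c) * y i) \<le> (\<Sum>i\<in>I. (v i / c) powr p / p + y i powr q / q)"
    by (intro sum_mono Youngs_inequality) (use p q v y c in auto)
  also have "\<dots> = (\<Sum>i\<in>I. v i powr p) / Sv / p + (\<Sum>i\<in>I. y i powr q) / q"
    by (simp add: sum.distrib vc sum_divide_distrib)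
  also have "\<dots> = 1"
    using Sv q yq by (simp add: Sv_def)
  finally have "(\<Sum>i\<in>I. v i * y i) / c \<le> 1" by (simp add: sum_divide_distrib)
  then show ?thesis using c by (simp add: c_def Sv_def field_simps)
qed

lemma lp_norming_weights:
  fixes w :: "'i \<Rightarrow> real"
  assumes fin: "finite I" and p: "1 < p" and w: "\<forall>i\<in>I. 0 \<le> w i"
  obtains y where "\<forall>i\<in>I. 0 \<le> y i" "(\<Sum>i\<in>I. w i * y i) = (\<Sum>i\<in>I. w i powr p) powr (1/p)"
    "\<And>v. \<forall>i\<in>I. 0 \<le> v i \<Longrightarrow> (\<Sum>i\<in>I. v i * y i) \<le> (\<Sum>i\<in>I. v i powr p) powr (1/p)"
proof (cases "(\<Sum>i\<in>I. w i powr p) = 0")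
  case True
  then have "\<forall>i\<in>I. w i = 0" using sum_nonneg_eq_0_iff[OF fin, of "\<lambda>i. w i powr p"] by auto
  then show ?thesis using that[of "\<lambda>i. 0"] by auto
next
  case False
  define q where "q = p / (p - 1)"
  have q: "q > 1" "1/p + 1/q = 1" using p by (auto simp: q_def field_simps)
  define Sw where "Sw = (\<Sum>i\<in>I. w i powr p)"
  have Sw: "Sw > 0" using False w unfolding Sw_def by (simp add: order_less_le sum_nonneg)
  \<comment> \<open>the equality case of Hoelder's inequality\<close>
  define y where "y i = w i powr (p - 1) / Sw powr ((p - 1) / p)" for i
  have y: "\<forall>i\<in>I. 0 \<le> y i" by (simp add: y_def)
  have "w i * w i powr (p - 1) = w i powr p" if "i \<in> I" for i
    using w that p by (cases "w i = 0") (auto simp: powr_diff)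
  then have "(\<Sum>i\<in>I. w i * y i) = Sw / Sw powr ((p - 1) / p)"
    by (simp add: y_def Sw_def sum_divide_distrib mult.assoc[symmetric])
  also have "\<dots> = Sw powr (1 - (p - 1) / p)"
    using Sw by (simp add: powr_diff)
  also have "1 - (p - 1) / p = 1 / p"
    using p by (simp add: field_simps)
  finally have "(\<Sum>i\<in>I. w i * y i) = (\<Sum>i\<in>I. w i powr p) powr (1/p)" by (simp add: Sw_def)
  moreover have "y i powr q = w i powr p / Sw" if "i \<in> I" for i
    using p Sw by (simp add: y_def powr_divide powr_powr q_def)
  then have "(\<Sum>i\<in>I. y i powr q) = 1"
    using Sw by (simp add: Sw_def flip: sum_divide_distrib)
  ultimately show ?thesis
    using that y Hoelder_sum_normalised[OF fin p q _ y] by blast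
qed

lemma lpnorm_dual:
  fixes f :: "nat set \<Rightarrow> 'a::real_normed_vector"
  assumes p: "1 < p"
  obtains y where "\<forall>A\<in>Pow {..<n}. 0 \<le> y A" "(\<Sum>A\<in>Pow {..<n}. norm (f A) * y A) = lpnorm p n f"
    "\<And>g :: nat set \<Rightarrow> 'a. (\<Sum>A\<in>Pow {..<n}. norm (g A) * y A) \<le> lpnorm p n g"
proof -
  obtain y where y: "\<forall>A\<in>Pow {..<n}. 0 \<le> y A"
      "(\<Sum>A\<in>Pow {..<n}. norm (f A) * y A) = (\<Sum>A\<in>Pow {..<n}. norm (f A) powr p) powr (1/p)"
      "\<And>v. \<forall>A\<in>Pow {..<n}. 0 \<le> v A \<Longrightarrow> (\<Sum>A\<in>Pow {..<n}. v A * y A) \<le> (\<Sum>A\<in>Pow {..<n}. v A powr p) powr (1/p)"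
    using lp_norming_weights[OF _ p, of "Pow {..<n}" "\<lambda>A. norm (f A)"] by auto
  define c where "c = (2 ^ n :: real) powr (1/p)"
  have c: "c > 0" by (simp add: c_def)
  have lp: "lpnorm p n g = (\<Sum>A\<in>Pow {..<n}. norm (g A) powr p) powr (1/p) / c" for g :: "nat set \<Rightarrow> 'a"
    unfolding lpnorm_def c_def by (rule powr_divide)
  show ?thesis
  proof (rule that[of "\<lambda>A. y A / c"])
    show "\<forall>A\<in>Pow {..<n}. 0 \<le> y A / c" using y(1) c by simp
    show "(\<Sum>A\<in>Pow {..<n}. norm (f A) * (y A / c)) = lpnorm p n f"
      using y(2) by (simp add: lp flip: sum_divide_distrib)
    show "(\<Sum>A\<in>Pow {..<n}. norm (g A) * (y A / c)) \<le> lpnorm p n g" for g :: "nat set \<Rightarrow> 'a"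
      using y(3)[of "\<lambda>A. norm (g A)"] c by (simp add: lp divide_right_mono flip: sum_divide_distrib)
  qed
qed

lemma lpnorm_nonneg: "0 \<le> lpnorm p n f"
  by (simp add: lpnorm_def)

lemma lpnorm_zero: "0 < p \<Longrightarrow> lpnorm p n (\<lambda>A. 0) = 0"
  by (simp add: lpnorm_def)

lemma lpnorm_cong:
  "(\<And>A. A \<in> Pow {..<n} \<Longrightarrow> norm (f A) = norm (g A)) \<Longrightarrow> lpnorm p n f = lpnorm p n g"
  unfolding lpnorm_def by simp

lemma lpnorm_scale:
  assumes "0 < p" "0 \<le> c" "\<And>A. A \<in> Pow {..<n} \<Longrightarrow> norm (f A) = c * norm (g A)"
  shows "lpnorm p n f = c * lpnorm p n g"
proof -
  have "lpnorm p n f = ((c powr p) * ((\<Sum>A\<in>Pow {..<n}. norm (g A) powr p) / 2 ^ n)) powr (1/p)"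
    using assms by (simp add: lpnorm_def powr_mult sum_distrib_left)
  also have "\<dots> = (c powr p) powr (1/p) * lpnorm p n g"
    unfolding lpnorm_def by (rule powr_mult)
  finally show ?thesis using assms by (simp add: powr_powr)
qed

lemma lpnorm_scaleR:
  "0 < p \<Longrightarrow> lpnorm p n (\<lambda>A. c *\<^sub>R f A) = \<bar>c\<bar> * lpnorm p n f"
  by (rule lpnorm_scale) auto

lemma lpnorm_triangle:
  assumes p: "1 < p"
  shows "lpnorm p n (\<lambda>A. f A + g A) \<le> lpnorm p n f + lpnorm p n g"
proof -
  obtain y where y: "\<forall>A\<in>Pow {..<n}. 0 \<le> y A"
      "(\<Sum>A\<in>Pow {..<n}. norm (f A + g A) * y A) = lpnorm p n (\<lambda>A. f A + g A)"
      "\<And>h :: nat set \<Rightarrow> 'a. (\<Sum>A\<in>Pow {..<n}. norm (h A) * y A) \<le> lpnorm p n h"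
    using lpnorm_dual[OF p, of n "\<lambda>A. f A + g A"] by blast
  have "lpnorm p n (\<lambda>A. f A + g A) \<le> (\<Sum>A\<in>Pow {..<n}. norm (f A) * y A + norm (g A) * y A)"
    unfolding y(2)[symmetric] distrib_right[symmetric] using y(1)
    by (intro sum_mono mult_right_mono norm_triangle_ineq) auto
  also have "\<dots> \<le> lpnorm p n f + lpnorm p n g"
    unfolding sum.distrib by (intro add_mono y(3))
  finally show ?thesis .
qed

lemma lpnorm_sum:
  assumes p: "1 < p"
  shows "lpnorm p n (\<lambda>A. \<Sum>j\<in>I. F j A) \<le> (\<Sum>j\<in>I. lpnorm p n (F j))"
proof (induction I rule: infinite_finite_induct)
  case (insert x I)
  have "lpnorm p n (\<lambda>A. F x A + (\<Sum>j\<in>I. F j A)) \<le> lpnorm p n (F x) + lpnorm p n (\<lambda>A. \<Sum>j\<in>I. F j A)"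
    by (rule lpnorm_triangle[OF p])
  then show ?case using insert by simp
qed (use p in \<open>simp_all add: lpnorm_zero\<close>)

lemma lpnorm_has_integral_le:
  fixes U :: "real \<Rightarrow> nat set \<Rightarrow> 'a::banach"
  assumes p: "1 < p"
    and int: "\<And>A. A \<in> Pow {..<n} \<Longrightarrow> ((\<lambda>s. U s A) has_integral V A) {a..b}"
    and norm_int: "\<And>A. A \<in> Pow {..<n} \<Longrightarrow> (\<lambda>s. norm (U s A)) integrable_on {a..b}"
    and bound: "\<And>s. s \<in> {a..b} \<Longrightarrow> lpnorm p n (U s) \<le> E s"
    and E: "E integrable_on {a..b}"
  shows "lpnorm p n V \<le> integral {a..b} E"
proof -
  obtain y where y: "\<forall>A\<in>Pow {..<n}. 0 \<le> y A"
      "(\<Sum>A\<in>Pow {..<n}. norm (V A) * y A) = lpnorm p n V"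
      "\<And>h :: nat set \<Rightarrow> 'a. (\<Sum>A\<in>Pow {..<n}. norm (h A) * y A) \<le> lpnorm p n h"
    using lpnorm_dual[OF p, of n V] by blast
  have weighted_int: "(\<lambda>s. norm (U s A) * y A) integrable_on {a..b}" if "A \<in> Pow {..<n}" for A
    using norm_int[OF that] by (rule integrable_on_mult_left)
  have "norm (V A) \<le> integral {a..b} (\<lambda>s. norm (U s A))" if "A \<in> Pow {..<n}" for A
    using integral_norm_bound_integral[OF has_integral_integrable[OF int[OF that]] norm_int[OF that]]
      integral_unique[OF int[OF that]] by simp
  then have "lpnorm p n V \<le> (\<Sum>A\<in>Pow {..<n}. integral {a..b} (\<lambda>s. norm (U s A) * y A))"
    unfolding y(2)[symmetric] using y(1) by (intro sum_mono) (simp add: mult_right_mono)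
  also have "\<dots> = integral {a..b} (\<lambda>s. \<Sum>A\<in>Pow {..<n}. norm (U s A) * y A)"
    by (rule integral_sum[symmetric]) (auto intro: weighted_int)
  also have "\<dots> \<le> integral {a..b} E"
    using order.trans[OF y(3) bound] by (intro integral_le integrable_sum weighted_int E) auto
  finally show ?thesis .
qed

lemma complex_structure_linear: "complex_structure J \<Longrightarrow> linear J"
  by (simp add: complex_structure_def)

lemma complex_structure_square: "complex_structure J \<Longrightarrow> J (J x) = - x"
  by (simp add: complex_structure_def)

lemma complex_structure_norm: "complex_structure J \<Longrightarrow> norm (J x) = norm x"
proof -
  assume "complex_structure J"
  then have "norm (cos (pi/2) *\<^sub>R x + sin (pi/2) *\<^sub>R J x) = norm x"
    unfolding complex_structure_def by blast
  then show ?thesis by simp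
qed

lemma complex_structure_bounded_linear: "complex_structure J \<Longrightarrow> bounded_linear J"
  by (rule bounded_linear_intro[where K=1])
    (auto simp: linear_add linear_scale complex_structure_linear complex_structure_norm)

lemma cmult_add_right: "complex_structure J \<Longrightarrow> cmult J c (x + y) = cmult J c x + cmult J c y"
  by (simp add: cmult_def linear_add[OF complex_structure_linear] scaleR_add_right)

lemma cmult_sum_right:
  assumes "complex_structure J"
  shows "cmult J c (\<Sum>j\<in>I. x j) = (\<Sum>j\<in>I. cmult J c (x j))"
proof (induction I rule: infinite_finite_induct)
  case (insert x F)
  then show ?case by (simp add: cmult_add_right[OF assms])
qed (simp_all add: cmult_def linear_0[OF complex_structure_linear[OF assms]])

lemma cmult_add_left: "cmult J (c + d) x = cmult J c x + cmult J d x"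
  by (simp add: cmult_def scaleR_add_left)

lemma cmult_sum_left: "cmult J (\<Sum>j\<in>I. c j) x = (\<Sum>j\<in>I. cmult J (c j) x)"
  by (simp add: cmult_def scaleR_sum_left sum.distrib)

lemma cmult_of_real [simp]: "cmult J (of_real r) x = r *\<^sub>R x"
  by (simp add: cmult_def)

lemma cmult_mult:
  assumes "complex_structure J"
  shows "cmult J (c * d) x = cmult J c (cmult J d x)"
  using complex_structure_linear[OF assms] complex_structure_square[OF assms]
  by (simp add: cmult_def linear_add linear_scale algebra_simps)

lemma norm_cmult:
  assumes "complex_structure J"
  shows "norm (cmult J c x) = cmod c * norm x"
proof -
  have "cmult J c x = cmod c *\<^sub>R (cos (Arg2pi c) *\<^sub>R x + sin (Arg2pi c) *\<^sub>R J x)"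
    by (simp add: cmult_def scaleR_add_right cos_Arg2pi sin_Arg2pi)
  then show ?thesis using assms by (simp add: complex_structure_def)
qed

lemma lpnorm_cmult:
  "complex_structure J \<Longrightarrow> 0 < p \<Longrightarrow> lpnorm p n (\<lambda>A. cmult J c (F A)) = cmod c * lpnorm p n F"
  by (rule lpnorm_scale) (auto simp: norm_cmult)

lemma bounded_linear_cmult_left: "bounded_linear (\<lambda>c. cmult J c x)"
  unfolding cmult_def
  by (intro bounded_linear_add bounded_linear_compose[OF bounded_linear_scaleR_left bounded_linear_Re]
      bounded_linear_compose[OF bounded_linear_scaleR_left bounded_linear_Im])

lemma continuous_on_cmult [continuous_intros]:
  assumes "complex_structure J" "continuous_on S c" "continuous_on S v"
  shows "continuous_on S (\<lambda>s. cmult J (c s) (v s))"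
proof -
  have "continuous_on S (\<lambda>s. J (v s))"
    using linear_continuous_on[OF complex_structure_bounded_linear[OF assms(1)]] assms(3)
    by (rule continuous_on_compose2) auto
  then show ?thesis unfolding cmult_def by (intro continuous_intros assms(2,3))
qed

section \<open>Homogeneous parts and the heat semigroup\<close>

definition level :: "nat \<Rightarrow> (nat set \<Rightarrow> 'a::real_vector) \<Rightarrow> nat \<Rightarrow> nat set \<Rightarrow> 'a" where
  "level n g k A = (\<Sum>S\<in>{S. S \<in> Pow {..<n} \<and> card S = k}. walsh S A *\<^sub>R fourier n g S)"

lemma heat_eq_sum_levels:
  assumes "complex_structure J"
  shows "heat J n z g A = (\<Sum>k\<le>n. cmult J (exp (- z * of_nat k)) (level n g k A))"
proof -
  have "card ` Pow {..<n} \<subseteq> {..n}"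
    using card_mono[of "{..<n}"] by auto
  then have "heat J n z g A = (\<Sum>k\<le>n. \<Sum>S\<in>{S. S \<in> Pow {..<n} \<and> card S = k}.
          cmult J (exp (- z * of_nat (card S))) (walsh S A *\<^sub>R fourier n g S))"
    unfolding heat_def by (intro sum.group[symmetric]) auto
  also have "\<dots> = (\<Sum>k\<le>n. cmult J (exp (- z * of_nat k)) (level n g k A))"
    unfolding level_def cmult_sum_right[OF assms] by (intro sum.cong refl) auto
  finally show ?thesis .
qed

lemma level_eq_0_if_tail: "tail_space n d g \<Longrightarrow> k \<le> d \<Longrightarrow> level n g k A = 0"
  unfolding level_def tail_space_def by (intro sum.neutral) auto

lemma sum_exp_roots_of_unity:
  fixes D :: int and N :: nat
  assumes N: "0 < N" and D: "\<bar>D\<bar> < int N"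
  shows "(\<Sum>j<N. exp (of_nat j * (of_int D * (\<i> * of_real (2 * pi / real N))))) =
    (if D = 0 then (of_nat N :: complex) else 0)"
proof (cases "D = 0")
  case False
  define u where "u = of_int D * (\<i> * of_real (2 * pi / real N))"
  have "exp u ^ N = exp (of_nat N * u)" by (simp add: exp_of_nat_mult)
  also have "exp (of_nat N * u) = 1"
    using N by (simp add: exp_eq_1 u_def field_simps)
  finally have root: "exp u ^ N = 1" .
  have "exp u \<noteq> 1"
  proof
    assume "exp u = 1"
    then obtain m :: int where "Im u = of_int (2 * m) * pi" by (auto simp: exp_eq_1)
    then have "real_of_int D = real_of_int (m * int N)"
      using N by (simp add: u_def field_simps)
    then have "D = m * int N" by (simp only: of_int_eq_iff)
    then show False using D False by (cases "m = 0") (auto simp: abs_mult)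
  qed
  have "(\<Sum>j<N. exp (of_nat j * u)) = (\<Sum>j<N. exp u ^ j)"
    by (simp add: exp_of_nat_mult)
  then show ?thesis
    using False root \<open>exp u \<noteq> 1\<close> unfolding u_def[symmetric] sum_gp_strict by simp
qed simp

text \<open>\<open>2n + 1\<close> equally spaced points on a vertical segment of length less than \<open>2\<pi>\<close>; averaging
  \<open>exp (z k) * heat J n z g\<close> over them extracts the \<open>k\<close>-th homogeneous part (discrete Fourier inversion).\<close>

definition level_node :: "nat \<Rightarrow> real \<Rightarrow> nat \<Rightarrow> complex" where
  "level_node n x j = of_real x + (of_nat j - of_nat n) * (\<i> * of_real (2 * pi / real (2 * n + 1)))"

lemma sum_level_nodes:
  assumes "k \<le> n" "m \<le> n"
  shows "(\<Sum>j<2*n+1. exp (level_node n x j * of_nat k) * exp (- level_node n x j * of_nat m)) =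
    (if k = m then of_nat (2*n+1) else 0)"
proof -
  define D where "D = int k - int m"
  define c where "c = \<i> * of_real (2 * pi / real (2*n+1))"
  define u where "u = of_int D * c"
  have "exp (level_node n x j * of_nat k) * exp (- level_node n x j * of_nat m)
      = exp (of_real (x * of_int D) - of_nat n * u) * exp (of_nat j * u)" for j
  proof -
    have "exp (level_node n x j * of_nat k) * exp (- level_node n x j * of_nat m)
        = exp (level_node n x j * of_int D)"
      by (simp add: D_def algebra_simps flip: exp_add)
    also have "level_node n x j * of_int D = (of_real (x * of_int D) - of_nat n * u) + of_nat j * u"
      unfolding level_node_def c_def[symmetric] u_def by (simp add: algebra_simps)
    finally show ?thesis by (simp only: exp_add)
  qed
  then have "(\<Sum>j<2*n+1. exp (level_node n x j * of_nat k) * exp (- level_node n x j * of_nat m))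
      = exp (of_real (x * of_int D) - of_nat n * u) * (\<Sum>j<2*n+1. exp (of_nat j * u))"
    by (simp only: sum_distrib_left)
  also have "(\<Sum>j<2*n+1. exp (of_nat j * u)) = (if D = 0 then of_nat (2*n+1) else 0)"
    unfolding u_def c_def by (rule sum_exp_roots_of_unity) (use assms in \<open>auto simp: D_def\<close>)
  finally show ?thesis by (simp add: D_def u_def)
qed

lemma level_eq_average_heat:
  assumes J: "complex_structure J" and k: "k \<le> n"
  shows "level n g k A = (1 / real (2*n+1)) *\<^sub>R
    (\<Sum>j<2*n+1. cmult J (exp (level_node n x j * of_nat k)) (heat J n (level_node n x j) g A))"
proof -
  have "(\<Sum>j<2*n+1. cmult J (exp (level_node n x j * of_nat k)) (heat J n (level_node n x j) g A))
     = (\<Sum>m\<le>n. \<Sum>j<2*n+1. cmult J (exp (level_node n x j * of_nat k) * exp (- level_node n x j * of_nat m))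
          (level n g m A))"
    by (subst sum.swap) (simp add: heat_eq_sum_levels[OF J] cmult_sum_right[OF J] cmult_mult[OF J])
  also have "\<dots> = (\<Sum>m\<le>n. cmult J (\<Sum>j<2*n+1. exp (level_node n x j * of_nat k) *
      exp (- level_node n x j * of_nat m)) (level n g m A))"
    by (simp only: cmult_sum_left)
  also have "\<dots> = (\<Sum>m\<le>n. if m = k then real (2*n+1) *\<^sub>R level n g m A else 0)"
  proof (intro sum.cong refl)
    fix m assume "m \<in> {..n}"
    then show "cmult J (\<Sum>j<2*n+1. exp (level_node n x j * of_nat k) * exp (- level_node n x j * of_nat m))
        (level n g m A) = (if m = k then real (2*n+1) *\<^sub>R level n g m A else 0)"
      by (subst sum_level_nodes[OF k]) (auto simp: cmult_def)
  qed
  also have "\<dots> = real (2*n+1) *\<^sub>R level n g k A" using k by (simp add: sum.delta')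
  finally show ?thesis by simp
qed

lemma in_sector_if_Im_le:
  assumes a: "0 < \<alpha>" "\<alpha> \<le> 1" and x: "pi * cot (\<alpha> * pi / 2) \<le> Re z" "0 < Re z"
    and y: "\<bar>Im z\<bar> \<le> pi"
  shows "z \<in> sector \<alpha>"
proof (cases "\<alpha> = 1")
  case True
  then show ?thesis using Arg_Re_nonneg[of z] x by (auto simp: sector_def)
next
  case False
  define \<theta> where "\<theta> = \<alpha> * pi / 2"
  have th: "0 < \<theta>" "\<theta> < pi / 2" using a False by (auto simp: \<theta>_def)
  have "\<bar>Im z / Re z\<bar> \<le> pi / Re z" using y x by (simp add: abs_div divide_right_mono)
  also have "pi / Re z \<le> tan \<theta>"
    using x th sin_gt_zero[of \<theta>] cos_gt_zero[of \<theta>]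
    by (simp add: \<theta>_def cot_def tan_def field_simps)
  finally have "\<bar>Im z / Re z\<bar> \<le> tan \<theta>" .
  then have "Im z / Re z \<le> tan \<theta>" "- tan \<theta> \<le> Im z / Re z"
    by linarith+
  then have "arctan (Im z / Re z) \<le> \<theta>" "- \<theta> \<le> arctan (Im z / Re z)"
    using arctan_le_iff[of "Im z / Re z" "tan \<theta>"] arctan_le_iff[of "- tan \<theta>" "Im z / Re z"]
      arctan_tan[of \<theta>] th by (auto simp: arctan_minus)
  then show ?thesis using x by (simp add: sector_def arg_conv_arctan \<theta>_def)
qed

lemma level_node_in_sector:
  assumes "0 < \<alpha>" "\<alpha> \<le> 1" "pi * cot (\<alpha> * pi / 2) \<le> x" "0 < x" "j < 2*n+1"
  shows "level_node n x j \<in> sector \<alpha>"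
proof (rule in_sector_if_Im_le)
  have "\<bar>Im (level_node n x j)\<bar> = \<bar>real j - real n\<bar> * (2 * pi / real (2*n+1))"
    by (simp add: level_node_def abs_mult)
  also have "\<dots> \<le> (real n + 1/2) * (2 * pi / real (2*n+1))"
    using assms(5) by (intro mult_right_mono) auto
  also have "\<dots> = pi" by (simp add: field_simps)
  finally show "\<bar>Im (level_node n x j)\<bar> \<le> pi" .
qed (use assms in \<open>simp_all add: level_node_def\<close>)

lemma sum_power_tail_le:
  fixes q :: real
  assumes "0 \<le> q" "2 * q \<le> 1"
  shows "(\<Sum>k=Suc d..n. q ^ k) \<le> 2 * q ^ Suc d"
proof (cases "Suc d \<le> n")
  case True
  have "(1 / 2) * (\<Sum>k=Suc d..n. q ^ k) \<le> (1 - q) * (\<Sum>k=Suc d..n. q ^ k)"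
    using assms by (intro mult_right_mono sum_nonneg) auto
  also have "\<dots> = q ^ Suc d - q ^ Suc n" by (rule sum_gp_multiplied[OF True])
  also have "\<dots> \<le> q ^ Suc d" using assms by simp
  finally show ?thesis by simp
qed (use assms in simp)

lemma heat_of_real:
  "heat J n (of_real t) f A = (\<Sum>S\<in>Pow {..<n}. exp (- t * real (card S)) *\<^sub>R (walsh S A *\<^sub>R fourier n f S))"
proof -
  have "exp (- of_real t * of_nat k) = (of_real (exp (- t * real k)) :: complex)" for k
    by (simp flip: exp_of_real)
  then show ?thesis by (simp add: heat_def)
qed

lemma heat_zero: "A \<subseteq> {..<n} \<Longrightarrow> heat J n 0 g A = g A"
  using heat_of_real[of J n 0 g A] by (simp add: fourier_inversion)

lemma has_integral_exp_mult_nat: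
  assumes "0 \<le> T"
  shows "((\<lambda>t. exp (- t * real k) * real k) has_integral (1 - exp (- T * real k))) {0..T}"
proof -
  have "((\<lambda>t. exp (- t * real k) * real k) has_integral (- exp (- T * real k) - - exp (- 0 * real k))) {0..T}"
  proof (rule fundamental_theorem_of_calculus)
    fix x :: real
    have "((\<lambda>t. - exp (- t * real k)) has_real_derivative exp (- x * real k) * real k) (at x within {0..T})"
      by (auto intro!: derivative_eq_intros)
    then show "((\<lambda>t. - exp (- t * real k)) has_vector_derivative exp (- x * real k) * real k) (at x within {0..T})"
      by (simp add: has_real_derivative_iff_has_vector_derivative)
  qed (use assms in simp)
  then show ?thesis by simp
qed

lemma has_integral_heat_hDelta:
  fixes f :: "nat set \<Rightarrow> 'a::real_normed_vector"
  assumes A: "A \<subseteq> {..<n}" and T: "0 \<le> T"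
  shows "((\<lambda>t. heat J n (of_real t) (hDelta n f) A) has_integral (f A - heat J n (of_real T) f A)) {0..T}"
proof -
  define w where "w S = walsh S A *\<^sub>R fourier n f S" for S
  have "heat J n (of_real t) (hDelta n f) A = (\<Sum>S\<in>Pow {..<n}. (exp (- t * real (card S)) * real (card S)) *\<^sub>R w S)"
    for t
    unfolding heat_of_real w_def by (intro sum.cong refl) (simp add: fourier_hDelta)
  moreover have "f A - heat J n (of_real T) f A = (\<Sum>S\<in>Pow {..<n}. (1 - exp (- T * real (card S))) *\<^sub>R w S)"
  proof -
    have "f A - heat J n (of_real T) f A = (\<Sum>S\<in>Pow {..<n}. w S) - (\<Sum>S\<in>Pow {..<n}. exp (- T * real (card S)) *\<^sub>R w S)"
      unfolding w_def heat_of_real fourier_inversion[OF A] ..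
    then show ?thesis by (simp add: scaleR_diff_left sum_subtractf)
  qed
  moreover have "((\<lambda>t. \<Sum>S\<in>Pow {..<n}. (exp (- t * real (card S)) * real (card S)) *\<^sub>R w S) has_integral
      (\<Sum>S\<in>Pow {..<n}. (1 - exp (- T * real (card S))) *\<^sub>R w S)) {0..T}"
    by (intro has_integral_sum has_integral_scaleR_left has_integral_exp_mult_nat T) simp
  ultimately show ?thesis by simp
qed

section \<open>Cauchy's formula on a triangle in the right half-plane\<close>

text \<open>\<open>z\<close> lies strictly to the left of each of the directed edges \<open>ab\<close>, \<open>bc\<close>, \<open>ca\<close>.\<close>

definition ccw_around :: "complex \<Rightarrow> complex \<Rightarrow> complex \<Rightarrow> complex \<Rightarrow> bool" where
  "ccw_around a b c z \<longleftrightarrow>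
     0 < Im ((b - a) * cnj (b - z)) \<and> 0 < Im ((c - b) * cnj (c - z)) \<and> 0 < Im ((a - c) * cnj (a - z))"

lemma notin_segment_if_Im_pos:
  assumes "0 < Im ((b - a) * cnj (b - z))"
  shows "z \<notin> closed_segment a b"
proof
  assume "z \<in> closed_segment a b"
  then obtain u where "z = (1 - u) *\<^sub>R a + u *\<^sub>R b" unfolding closed_segment_def by auto
  then have "b - z = of_real (1 - u) * (b - a)" by (simp add: scaleR_conv_of_real algebra_simps)
  then have "(b - a) * cnj (b - z) = of_real (1 - u) * ((b - a) * cnj (b - a))"
    by (simp add: mult.left_commute)
  also have "(b - a) * cnj (b - a) = of_real ((cmod (b - a))\<^sup>2)"
    by (simp only: complex_norm_square)
  finally have "Im ((b - a) * cnj (b - z)) = 0" by (simp del: of_real_power)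
  with assms show False by simp
qed

lemma ccw_around_notin_edges:
  assumes "ccw_around a b c z"
  shows "z \<notin> closed_segment a b" "z \<notin> closed_segment b c" "z \<notin> closed_segment c a"
  using assms notin_segment_if_Im_pos by (auto simp: ccw_around_def)

lemma winding_number_triangle:
  assumes "ccw_around a b c z"
  shows "winding_number (linepath a b +++ linepath b c +++ linepath c a) z = 1"
proof -
  note notin [simp] = ccw_around_notin_edges[OF assms]
  have "0 < Re (winding_number (linepath a b +++ linepath b c +++ linepath c a) z)"
    using assms
    by (simp add: ccw_around_def winding_number_linepath_pos_lt path_image_join winding_number_join_pos_combined)
  moreover have "Re (winding_number (linepath a b +++ linepath b c +++ linepath c a) z) < 2"
    using winding_number_lt_half_linepath[of _ a b] winding_number_lt_half_linepath[of _ b c]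
      winding_number_lt_half_linepath[of _ c a] notin
    by (fastforce simp add: winding_number_join path_image_join)
  ultimately show ?thesis
    by (intro winding_number_eq_1) (simp_all add: path_image_join)
qed

text \<open>The integrand of \<open>(2\<pi>i)\<^sup>-\<^sup>1 \<integral>\<^sub>[\<^sub>u\<^sub>,\<^sub>v\<^sub>] f w / (w - z) dw\<close> in the parametrisation by \<open>[0,1]\<close>.\<close>

definition cauchy_edge :: "(complex \<Rightarrow> complex) \<Rightarrow> complex \<Rightarrow> complex \<Rightarrow> complex \<Rightarrow> real \<Rightarrow> complex" where
  "cauchy_edge f z u v s = f (linepath u v s) * (v - u) / ((linepath u v s - z) * (2 * of_real pi * \<i>))"

lemma closed_segment_subset_right_half_plane:
  "0 \<le> Re u \<Longrightarrow> 0 \<le> Re v \<Longrightarrow> closed_segment u v \<subseteq> {w. 0 \<le> Re w}"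
  by (rule closed_segment_subset) (use convex_halfspace_Re_ge[of 0] in auto)

lemma continuous_on_cauchy_edge:
  assumes f: "continuous_on {w. 0 \<le> Re w} f" and uv: "0 \<le> Re u" "0 \<le> Re v"
    and z: "z \<notin> closed_segment u v"
  shows "continuous_on {0..1} (cauchy_edge f z u v)"
proof -
  have "linepath u v ` {0..1} \<subseteq> {w. 0 \<le> Re w}"
    using closed_segment_subset_right_half_plane[OF uv] linepath_in_path by blast
  then have "continuous_on {0..1} (\<lambda>s. f (linepath u v s))"
    by (rule continuous_on_compose2[OF f continuous_on_linepath])
  moreover have "linepath u v s - z \<noteq> 0" if "s \<in> {0..1}" for s
    using linepath_in_path[OF that, of u v] z by auto
  ultimately show ?thesis
    unfolding cauchy_edge_def by (intro continuous_intros) auto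
qed

lemma integral_cauchy_edge:
  assumes "(\<lambda>w. f w / (w - z)) contour_integrable_on linepath u v"
  shows "integral {0..1} (cauchy_edge f z u v) = contour_integral (linepath u v) (\<lambda>w. f w / (w - z)) / (2 * pi * \<i>)"
proof -
  have "((\<lambda>s. f (linepath u v s) / (linepath u v s - z) * (v - u)) has_integral
      contour_integral (linepath u v) (\<lambda>w. f w / (w - z))) {0..1}"
    using has_contour_integral_integral[OF assms] by (simp add: has_contour_integral_linepath)
  then have "((\<lambda>s. (1 / (2 * pi * \<i>)) * (f (linepath u v s) / (linepath u v s - z) * (v - u))) has_integral
      (1 / (2 * pi * \<i>)) * contour_integral (linepath u v) (\<lambda>w. f w / (w - z))) {0..1}"
    by (rule has_integral_mult_right)
  then show ?thesis
    unfolding cauchy_edge_def by (simp add: integral_unique field_simps)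
qed

lemma Cauchy_triangle_edges:
  assumes tri: "ccw_around a b c z" and z: "0 < Re z"
    and abc: "0 \<le> Re a" "0 \<le> Re b" "0 \<le> Re c"
    and fc: "continuous_on {w. 0 \<le> Re w} f" and fh: "f holomorphic_on {w. 0 < Re w}"
  shows "integral {0..1} (cauchy_edge f z a b) + integral {0..1} (cauchy_edge f z b c)
    + integral {0..1} (cauchy_edge f z c a) = f z"
proof -
  define H where "H = {w::complex. 0 \<le> Re w}"
  define h where "h w = f w / (w - z)" for w
  define \<gamma> where "\<gamma> = linepath a b +++ linepath b c +++ linepath c a"
  note notin = ccw_around_notin_edges[OF tri]
  have edges: "closed_segment a b \<subseteq> H" "closed_segment b c \<subseteq> H" "closed_segment c a \<subseteq> H"
    unfolding H_def using closed_segment_subset_right_half_plane abc by auto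
  have interior_H: "interior H = {w. 0 < Re w}"
    using interior_halfspace_ge[of "1::complex" 0] by (simp add: H_def inner_complex_def)
  have "(h has_contour_integral (2 * pi * \<i> * winding_number \<gamma> z * f z)) \<gamma>"
    unfolding h_def
  proof (rule Cauchy_integral_formula_weak[of H "{}"])
    show "convex H" unfolding H_def using convex_halfspace_Re_ge[of 0] by simp
    show "continuous_on H f" using fc by (simp add: H_def)
    show "f field_differentiable at w" if "w \<in> interior H - {}" for w
      using that fh interior_H by (intro holomorphic_on_imp_differentiable_at[OF _ open_halfspace_Re_gt]) auto
    show "path_image \<gamma> \<subseteq> H - {z}"
      unfolding \<gamma>_def using edges notin by (auto simp: path_image_join)
    show "z \<in> interior H - {}" using z interior_H by simp
    show "valid_path \<gamma>" unfolding \<gamma>_def by (intro valid_path_join) auto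
  qed (simp_all add: \<gamma>_def)
  moreover have integrable: "h contour_integrable_on linepath u v"
    if "closed_segment u v \<subseteq> H" "z \<notin> closed_segment u v" for u v
  proof -
    have "continuous_on (closed_segment u v) f"
      using continuous_on_subset[OF fc] that(1) by (simp add: H_def)
    then show ?thesis
      unfolding h_def using that(2) by (intro contour_integrable_continuous_linepath continuous_intros) auto
  qed
  then have "(h has_contour_integral (contour_integral (linepath a b) h + (contour_integral (linepath b c) h
      + contour_integral (linepath c a) h))) \<gamma>"
    unfolding \<gamma>_def using edges notin
    by (intro has_contour_integral_join has_contour_integral_integral valid_path_join) auto
  ultimately have "contour_integral (linepath a b) h + (contour_integral (linepath b c) h
      + contour_integral (linepath c a) h) = 2 * pi * \<i> * f z"
    using has_contour_integral_unique winding_number_triangle[OF tri] unfolding \<gamma>_def by fastforce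
  then show ?thesis
    using integrable edges notin
    by (simp add: integral_cauchy_edge h_def[abs_def] field_simps flip: add_divide_distrib)
qed

lemma continuous_on_heat:
  assumes "complex_structure J" "continuous_on S \<gamma>"
  shows "continuous_on S (\<lambda>s. heat J n (\<gamma> s) g A)"
  unfolding heat_def by (intro continuous_intros assms)

lemma lpnorm_edge_integral_le:
  fixes J :: "'a::banach \<Rightarrow> 'a" and g :: "nat set \<Rightarrow> 'a"
  assumes J: "complex_structure J" and p: "1 < p"
    and K: "continuous_on {w. 0 \<le> Re w} K" and uv: "0 \<le> Re u" "0 \<le> Re v"
    and z: "z \<notin> closed_segment u v"
    and E: "\<And>s. s \<in> {0..1} \<Longrightarrow> cmod (cauchy_edge K z u v s) * lpnorm p n (heat J n (linepath u v s) g) \<le> E s"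
    and E_int: "E integrable_on {0..1}"
  shows "lpnorm p n (\<lambda>A. \<Sum>S\<in>Pow {..<n}.
      cmult J (integral {0..1} (cauchy_edge (\<lambda>w. exp (- w * of_nat (card S)) * K w) z u v)) (walsh S A *\<^sub>R fourier n g S))
    \<le> integral {0..1} E"
proof (rule lpnorm_has_integral_le[OF p _ _ _ E_int])
  define U where "U s A = cmult J (cauchy_edge K z u v s) (heat J n (linepath u v s) g A)" for s A
  have edge_exp: "cauchy_edge (\<lambda>w. exp (- w * of_nat k) * K w) z u v s
      = exp (- linepath u v s * of_nat k) * cauchy_edge K z u v s" for k s
    by (simp add: cauchy_edge_def)
  have cont: "continuous_on {0..1} (cauchy_edge (\<lambda>w. exp (- w * of_nat k) * K w) z u v)" for k
    using K uv z by (intro continuous_on_cauchy_edge continuous_intros) auto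
  show "((\<lambda>s. U s A) has_integral (\<Sum>S\<in>Pow {..<n}.
      cmult J (integral {0..1} (cauchy_edge (\<lambda>w. exp (- w * of_nat (card S)) * K w) z u v))
        (walsh S A *\<^sub>R fourier n g S))) {0..1}" for A
  proof -
    have U: "U s A = (\<Sum>S\<in>Pow {..<n}. cmult J (cauchy_edge (\<lambda>w. exp (- w * of_nat (card S)) * K w) z u v s)
        (walsh S A *\<^sub>R fourier n g S))" for s
      unfolding U_def heat_def cmult_sum_right[OF J] edge_exp
      by (intro sum.cong refl) (simp add: cmult_mult[OF J, symmetric] mult.commute)
    have "((\<lambda>s. cmult J (cauchy_edge (\<lambda>w. exp (- w * of_nat k) * K w) z u v s) x)
        has_integral cmult J (integral {0..1} (cauchy_edge (\<lambda>w. exp (- w * of_nat k) * K w) z u v)) x) {0..1}"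
      for k x
      using has_integral_linear[OF integrable_integral[OF integrable_continuous_real[OF cont]]
          bounded_linear_cmult_left]
      by (simp add: comp_def)
    then show ?thesis
      unfolding U by (intro has_integral_sum) auto
  qed
  show "(\<lambda>s. norm (U s A)) integrable_on {0..1}" for A
    unfolding U_def using K uv z J
    by (intro integrable_continuous_interval continuous_intros continuous_on_cauchy_edge continuous_on_heat
        continuous_on_linepath)
  show "lpnorm p n (U s) \<le> E s" if "s \<in> {0..1}" for s
    using E[OF that] p unfolding U_def by (simp add: lpnorm_cmult[OF J])
qed

lemma lpnorm_heat_le_triangle:
  fixes J :: "'a::banach \<Rightarrow> 'a" and g :: "nat set \<Rightarrow> 'a" and K :: "complex \<Rightarrow> complex"
  assumes J: "complex_structure J" and p: "1 < p"
    and tri: "ccw_around a b c (of_real t)" and t: "0 < t"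
    and abc: "0 \<le> Re a" "0 \<le> Re b" "0 \<le> Re c"
    and Kc: "continuous_on {w. 0 \<le> Re w} K" and Kh: "K holomorphic_on {w. 0 < Re w}"
    and K1: "K (of_real t) = 1"
    and E1: "\<And>s. s \<in> {0..1} \<Longrightarrow> cmod (cauchy_edge K t a b s) * lpnorm p n (heat J n (linepath a b s) g) \<le> E1 s"
    and E2: "\<And>s. s \<in> {0..1} \<Longrightarrow> cmod (cauchy_edge K t b c s) * lpnorm p n (heat J n (linepath b c s) g) \<le> E2 s"
    and E3: "\<And>s. s \<in> {0..1} \<Longrightarrow> cmod (cauchy_edge K t c a s) * lpnorm p n (heat J n (linepath c a s) g) \<le> E3 s"
    and E_int: "(E1 has_integral I1) {0..1}" "(E2 has_integral I2) {0..1}" "(E3 has_integral I3) {0..1}"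
  shows "lpnorm p n (heat J n t g) \<le> I1 + I2 + I3"
proof -
  define V where "V u v A = (\<Sum>S\<in>Pow {..<n}.
      cmult J (integral {0..1} (cauchy_edge (\<lambda>w. exp (- w * of_nat (card S)) * K w) t u v))
        (walsh S A *\<^sub>R fourier n g S))" for u v A
  note notin = ccw_around_notin_edges[OF tri]
  have "exp (- of_real t * of_nat k) = integral {0..1} (cauchy_edge (\<lambda>w. exp (- w * of_nat k) * K w) t a b)
      + integral {0..1} (cauchy_edge (\<lambda>w. exp (- w * of_nat k) * K w) t b c)
      + integral {0..1} (cauchy_edge (\<lambda>w. exp (- w * of_nat k) * K w) t c a)" for k
  proof -
    have "continuous_on {w. 0 \<le> Re w} (\<lambda>w. exp (- w * of_nat k) * K w)"
      by (intro continuous_intros Kc)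
    moreover have "(\<lambda>w. exp (- w * of_nat k) * K w) holomorphic_on {w. 0 < Re w}"
      by (intro holomorphic_intros Kh)
    ultimately show ?thesis
      using Cauchy_triangle_edges[OF tri _ abc] t K1 by simp
  qed
  then have "heat J n t g = (\<lambda>A. (V a b A + V b c A) + V c a A)"
    unfolding heat_def V_def by (simp add: cmult_add_left sum.distrib fun_eq_iff)
  then have "lpnorm p n (heat J n t g) = lpnorm p n (\<lambda>A. (V a b A + V b c A) + V c a A)"
    by simp
  also have "\<dots> \<le> lpnorm p n (V a b) + lpnorm p n (V b c) + lpnorm p n (V c a)"
    using lpnorm_triangle[OF p, of n "\<lambda>A. V a b A + V b c A" "V c a"] lpnorm_triangle[OF p, of n "V a b" "V b c"]
    by simp
  also have "\<dots> \<le> integral {0..1} E1 + integral {0..1} E2 + integral {0..1} E3"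
    unfolding V_def using abc notin E1 E2 E3 E_int
    by (intro add_mono lpnorm_edge_integral_le[OF J p Kc]) (auto intro: has_integral_integrable)
  also have "\<dots> = I1 + I2 + I3"
    using E_int by (simp add: integral_unique)
  finally show ?thesis .
qed

section \<open>The contour kernel\<close>

text \<open>On the rays \<open>\<bar>arg z\<bar> = \<pi> / (2\<beta>)\<close> one has \<open>Re (z powr \<beta>) = 0\<close>, so there the kernel carries exactly the
  factor \<open>exp (- \<lambda> t powr \<beta>)\<close>; the factor \<open>(2t / (z + t))\<^sup>2\<close> equals \<open>1\<close> at \<open>z = t\<close> and keeps the edge
  integrals bounded uniformly in \<open>t\<close>.\<close>

definition contour_kernel :: "real \<Rightarrow> real \<Rightarrow> real \<Rightarrow> complex \<Rightarrow> complex" where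
  "contour_kernel lam beta t z =
     exp (of_real lam * (z powr of_real beta - of_real (t powr beta))) * (2 * of_real t / (z + of_real t))\<^sup>2"

lemma plus_of_real_neq_0: "0 \<le> Re z \<Longrightarrow> 0 < t \<Longrightarrow> z + of_real t \<noteq> 0"
  by (auto simp: complex_eq_iff)

lemma continuous_on_contour_kernel:
  assumes "0 < beta" "0 < t"
  shows "continuous_on {z. 0 \<le> Re z} (contour_kernel lam beta t)"
proof -
  have "continuous_on {z. 0 \<le> Re z} (\<lambda>z. z powr of_real beta)"
    by (rule continuous_on_powr_complex) (use assms in \<open>auto intro: continuous_intros\<close>)
  then show ?thesis unfolding contour_kernel_def
    by (intro continuous_intros) (use assms plus_of_real_neq_0 in auto)
qed

lemma holomorphic_contour_kernel: "0 < t \<Longrightarrow> contour_kernel lam beta t holomorphic_on {z. 0 < Re z}"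
  unfolding contour_kernel_def
  by (intro holomorphic_intros) (auto simp: complex_nonpos_Reals_iff dest: plus_of_real_neq_0[OF less_imp_le])

lemma contour_kernel_at_t: "0 < t \<Longrightarrow> contour_kernel lam beta t (of_real t) = 1"
  by (simp add: contour_kernel_def powr_of_real)

lemma norm_contour_kernel:
  assumes "0 < t" "0 \<le> Re z"
  shows "cmod (contour_kernel lam beta t z) =
    exp (lam * (Re (z powr of_real beta) - t powr beta)) * (4 * t\<^sup>2 / (cmod (z + of_real t))\<^sup>2)"
proof -
  have "cmod ((2 * of_real t / (z + of_real t))\<^sup>2) = 4 * t\<^sup>2 / (cmod (z + of_real t))\<^sup>2"
    using assms by (simp add: norm_divide norm_power power_divide norm_mult power_mult_distrib)
  then show ?thesis by (simp add: contour_kernel_def norm_mult norm_exp_eq_Re)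
qed

lemma Re_powr_of_real:
  assumes "z \<noteq> 0"
  shows "Re (z powr of_real beta) = cmod z powr beta * cos (beta * Arg z)"
proof -
  have "z powr of_real beta = of_real (exp (beta * ln (cmod z))) * cis (beta * Arg z)"
    using assms by (simp add: powr_def Ln_Arg algebra_simps cis_conv_exp exp_add flip: exp_of_real)
  then show ?thesis using assms by (simp add: powr_def)
qed

lemma Re_powr_le: "Re (z powr of_real beta) \<le> cmod z powr beta"
  using complex_Re_le_cmod[of "z powr of_real beta"] by (simp add: norm_powr_real_powr')

lemma norm_cauchy_edge:
  "cmod (cauchy_edge f z u v s) = cmod (f (linepath u v s)) * cmod (v - u) / (cmod (linepath u v s - z) * (2 * pi))"
  by (simp add: cauchy_edge_def norm_mult norm_divide)

lemma has_integral_arctan_ray: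
  fixes t r :: real
  assumes t: "t > 0" and r: "r > 0"
  shows "((\<lambda>s. t * r / (s\<^sup>2 * r\<^sup>2 + t\<^sup>2)) has_integral arctan (r / t)) {0..1}"
proof -
  have "((\<lambda>s. t * r / (s\<^sup>2 * r\<^sup>2 + t\<^sup>2)) has_integral (arctan (1 * r / t) - arctan (0 * r / t))) {0..1}"
  proof (rule fundamental_theorem_of_calculus)
    fix x :: real assume "x \<in> {0..1}"
    have d: "((\<lambda>s. arctan (s * r / t)) has_real_derivative (inverse (1 + (x * r / t)\<^sup>2) * (r / t))) (at x within {0..1})"
      by (rule DERIV_chain2[OF DERIV_arctan]) (use t in \<open>auto intro!: derivative_eq_intros\<close>)
    have "inverse (1 + (x * r / t)\<^sup>2) * (r / t) = t * r / (x\<^sup>2 * r\<^sup>2 + t\<^sup>2)"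
      using t by (simp add: field_simps power2_eq_square)
    with d show "((\<lambda>s. arctan (s * r / t)) has_vector_derivative t * r / (x\<^sup>2 * r\<^sup>2 + t\<^sup>2)) (at x within {0..1})"
      by (simp add: has_real_derivative_iff_has_vector_derivative)
  qed simp
  then show ?thesis by simp
qed

lemma has_integral_arctan_ray_reflected:
  fixes t r :: real
  assumes t: "t > 0" and r: "r > 0"
  shows "((\<lambda>s. t * r / ((1 - s)\<^sup>2 * r\<^sup>2 + t\<^sup>2)) has_integral arctan (r / t)) {0..1}"
proof -
  have "((\<lambda>s. t * r / ((1 - s)\<^sup>2 * r\<^sup>2 + t\<^sup>2)) has_integral ((- arctan ((1 - 1) * r / t)) - (- arctan ((1 - 0) * r / t)))) {0..1}"
  proof (rule fundamental_theorem_of_calculus)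
    fix x :: real assume "x \<in> {0..1}"
    have d0: "((\<lambda>s. arctan ((1 - s) * r / t)) has_real_derivative (inverse (1 + ((1 - x) * r / t)\<^sup>2) * (- r / t))) (at x within {0..1})"
      by (rule DERIV_chain2[OF DERIV_arctan]) (use t in \<open>auto intro!: derivative_eq_intros simp: field_simps\<close>)
    have d: "((\<lambda>s. - arctan ((1 - s) * r / t)) has_real_derivative (- (inverse (1 + ((1 - x) * r / t)\<^sup>2) * (- r / t)))) (at x within {0..1})"
      using DERIV_minus[OF d0] .
    have "- (inverse (1 + ((1 - x) * r / t)\<^sup>2) * (- r / t)) = t * r / ((1 - x)\<^sup>2 * r\<^sup>2 + t\<^sup>2)"
      using t by (simp add: field_simps power2_eq_square)
    with d show "((\<lambda>s. - arctan ((1 - s) * r / t)) has_vector_derivative t * r / ((1 - x)\<^sup>2 * r\<^sup>2 + t\<^sup>2)) (at x within {0..1})"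
      by (simp add: has_real_derivative_iff_has_vector_derivative)
  qed simp
  then show ?thesis by simp
qed

lemma has_integral_arctan_segment:
  fixes t Y :: real
  assumes t: "t > 0" and Y: "Y > 0"
  shows "((\<lambda>s. t * Y / (t\<^sup>2 + Y\<^sup>2 * (1 - 2 * s)\<^sup>2)) has_integral arctan (Y / t)) {0..1}"
proof -
  have "((\<lambda>s. t * Y / (t\<^sup>2 + Y\<^sup>2 * (1 - 2 * s)\<^sup>2)) has_integral
          ((- arctan (Y * (1 - 2 * 1) / t) / 2) - (- arctan (Y * (1 - 2 * 0) / t) / 2))) {0..1}"
  proof (rule fundamental_theorem_of_calculus)
    fix x :: real assume "x \<in> {0..1}"
    have d0: "((\<lambda>s. arctan (Y * (1 - 2 * s) / t)) has_real_derivative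
              (inverse (1 + (Y * (1 - 2 * x) / t)\<^sup>2) * (- 2 * Y / t))) (at x within {0..1})"
      by (rule DERIV_chain2[OF DERIV_arctan]) (use t in \<open>auto intro!: derivative_eq_intros simp: field_simps\<close>)
    have d: "((\<lambda>s. - arctan (Y * (1 - 2 * s) / t) / 2) has_real_derivative
              (- (inverse (1 + (Y * (1 - 2 * x) / t)\<^sup>2) * (- 2 * Y / t)) / 2)) (at x within {0..1})"
      using DERIV_cdivide[OF DERIV_minus[OF d0], of 2] .
    have pos: "t\<^sup>2 + Y\<^sup>2 * (1 - 2 * x)\<^sup>2 > 0" using t by (simp add: add_pos_nonneg)
    have e1: "1 + (Y * (1 - 2 * x) / t)\<^sup>2 = (t\<^sup>2 + Y\<^sup>2 * (1 - 2 * x)\<^sup>2) / t\<^sup>2"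
    proof -
      have "(Y * (1 - 2 * x) / t)\<^sup>2 = Y\<^sup>2 * (1 - 2 * x)\<^sup>2 / t\<^sup>2" by (simp only: power_divide power_mult_distrib)
      then show ?thesis using t by (simp add: field_simps)
    qed
    have "- (inverse (1 + (Y * (1 - 2 * x) / t)\<^sup>2) * (- 2 * Y / t)) / 2 = t * Y / (t\<^sup>2 + Y\<^sup>2 * (1 - 2 * x)\<^sup>2)"
      unfolding e1 using t pos by (simp add: field_simps power2_eq_square)
    with d show "((\<lambda>s. - arctan (Y * (1 - 2 * s) / t) / 2) has_vector_derivative t * Y / (t\<^sup>2 + Y\<^sup>2 * (1 - 2 * x)\<^sup>2)) (at x within {0..1})"
      by (simp add: has_real_derivative_iff_has_vector_derivative)
  qed simp
  then show ?thesis by (simp add: arctan_minus)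
qed

lemma Re_powr_on_ray:
  fixes u rho th phi beta :: real
  assumes u: "0 \<le> u" and rho: "0 < rho" and phi: "phi = th \<or> phi = - th"
    and th: "0 < th" "th < pi / 2" and beta: "beta * th = pi / 2"
  shows "Re ((of_real u * rcis rho phi) powr of_real beta) = 0"
proof (cases "u = 0")
  case False
  have "Arg (of_real u * rcis rho phi) = Arg (rcis rho phi)" using u False by simp
  also have "\<dots> = phi" by (rule Arg_rcis) (use phi th rho in auto)
  finally have "Arg (of_real u * rcis rho phi) = phi" .
  moreover have "cos (beta * th) = 0" by (simp only: beta cos_pi_half)
  then have "cos (beta * phi) = 0" using phi by auto
  ultimately show ?thesis using u rho False by (simp add: Re_powr_of_real rcis_def)
qed simp

lemma norm_ray_add_diff_of_real:
  fixes u rho th phi t :: real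
  assumes u: "0 \<le> u" and rho: "0 < rho" and t: "0 < t" and phi: "phi = th \<or> phi = - th"
    and th: "0 < th" "th < pi / 2"
  defines "z \<equiv> of_real u * rcis rho phi"
  shows "u\<^sup>2 * rho\<^sup>2 + t\<^sup>2 \<le> (cmod (z + of_real t))\<^sup>2" and "t * sin th \<le> cmod (z - of_real t)"
proof -
  have Re: "Re z = u * rho * cos th" and Im: "(Im z)\<^sup>2 = u\<^sup>2 * rho\<^sup>2 * (sin th)\<^sup>2"
    using phi by (auto simp: z_def power_mult_distrib)
  have "0 \<le> Re z" using u rho th cos_gt_zero[of th] by (simp add: Re)
  moreover have norm_z: "(Re z)\<^sup>2 + (Im z)\<^sup>2 = u\<^sup>2 * rho\<^sup>2"
    unfolding Re Im using sin_cos_squared_add[of th] by algebra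
  moreover have "(cmod (z + of_real t))\<^sup>2 = ((Re z)\<^sup>2 + (Im z)\<^sup>2) + 2 * t * Re z + t\<^sup>2"
    unfolding cmod_power2 by (simp add: power2_eq_square algebra_simps)
  ultimately show "u\<^sup>2 * rho\<^sup>2 + t\<^sup>2 \<le> (cmod (z + of_real t))\<^sup>2"
    using t by simp
  have "(cmod (z - of_real t))\<^sup>2 = ((Re z)\<^sup>2 + (Im z)\<^sup>2) - 2 * t * Re z + t\<^sup>2"
    unfolding cmod_power2 by (simp add: power2_eq_square algebra_simps)
  also have "\<dots> = (u * rho - t * cos th)\<^sup>2 + (t * sin th)\<^sup>2"
    using norm_z Re sin_cos_squared_add[of th] by algebra
  finally have "(t * sin th)\<^sup>2 \<le> (cmod (z - of_real t))\<^sup>2" by simp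
  then show "t * sin th \<le> cmod (z - of_real t)"
    using t th sin_gt_zero[of th] by (simp add: power2_le_iff_abs_le)
qed

lemma norm_cauchy_weight_on_ray_le:
  fixes t u rho th phi beta lam :: real
  assumes t: "0 < t" and u: "0 \<le> u" and rho: "0 < rho"
    and phi: "phi = th \<or> phi = - th" and th: "0 < th" "th < pi / 2" and beta: "beta * th = pi / 2"
  defines "z \<equiv> of_real u * rcis rho phi"
  shows "cmod (contour_kernel lam beta t z) * rho / (cmod (z - of_real t) * (2 * pi))
    \<le> exp (- lam * t powr beta) * (2 / (pi * sin th)) * (t * rho / (u\<^sup>2 * rho\<^sup>2 + t\<^sup>2))"
proof -
  define D where "D = u\<^sup>2 * rho\<^sup>2 + t\<^sup>2"
  note dist = norm_ray_add_diff_of_real[OF u rho t phi th, folded z_def D_def]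
  have D: "0 < D" using t by (simp add: D_def add_nonneg_pos)
  have ts: "0 < t * sin th" using t th sin_gt_zero[of th] by simp
  have "0 \<le> Re z" using phi u rho th cos_gt_zero[of th] by (auto simp: z_def)
  then have "cmod (contour_kernel lam beta t z) * rho / (cmod (z - of_real t) * (2 * pi))
      = exp (- lam * t powr beta) * (4 * t\<^sup>2 * rho) / ((cmod (z + of_real t))\<^sup>2 * cmod (z - of_real t) * (2 * pi))"
    using Re_powr_on_ray[OF u rho phi th beta] t by (simp add: norm_contour_kernel z_def field_simps)
  also have "\<dots> \<le> exp (- lam * t powr beta) * (4 * t\<^sup>2 * rho) / (D * (t * sin th) * (2 * pi))"
  proof (intro divide_left_mono mult_right_mono mult_mono)
    have "0 < (cmod (z + of_real t))\<^sup>2" "0 < cmod (z - of_real t)" using dist D ts by linarith+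
    then show "0 < (cmod (z + of_real t))\<^sup>2 * cmod (z - of_real t) * (2 * pi) * (D * (t * sin th) * (2 * pi))"
      using D ts t th sin_gt_zero[of th] by (intro mult_pos_pos) auto
  qed (use dist D ts rho in auto)
  also have "\<dots> = exp (- lam * t powr beta) * (2 / (pi * sin th)) * (t * rho / D)"
    using ts D by (simp add: field_simps power2_eq_square)
  finally show ?thesis by (simp add: D_def)
qed

lemma norm_cauchy_weight_far_le:
  fixes t rho beta lam L :: real
  assumes t: "0 < t" "2 * t \<le> Re z" and R: "0 < Re z" and z: "cmod z \<le> rho"
    and beta: "0 < beta" and lam: "0 \<le> lam" and L: "0 \<le> L"
  shows "cmod (contour_kernel lam beta t z) * L / (cmod (z - of_real t) * (2 * pi))
    \<le> exp (lam * (rho powr beta - t powr beta)) * (L / (pi * Re z))"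
proof -
  have "Re (z powr of_real beta) \<le> rho powr beta"
    using Re_powr_le[of z beta] powr_mono2[of beta "cmod z" rho] z beta by simp
  then have exp_le: "exp (lam * (Re (z powr of_real beta) - t powr beta)) \<le> exp (lam * (rho powr beta - t powr beta))"
    using lam by (simp add: mult_left_mono)
  have "2 * t \<le> cmod (z + of_real t)"
    using complex_Re_le_cmod[of "z + of_real t"] t by simp
  then have "4 * t\<^sup>2 / (cmod (z + of_real t))\<^sup>2 \<le> 1"
    using t power_mono[of "2 * t" "cmod (z + of_real t)" 2] by (simp add: divide_le_eq power_mult_distrib)
  then have K: "cmod (contour_kernel lam beta t z) \<le> exp (lam * (rho powr beta - t powr beta)) * 1"
    unfolding norm_contour_kernel[OF t(1) less_imp_le[OF R]] by (intro mult_mono exp_le) auto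
  have "Re z / 2 \<le> cmod (z - of_real t)"
    using complex_Re_le_cmod[of "z - of_real t"] t by simp
  then have "cmod (contour_kernel lam beta t z) * L / (cmod (z - of_real t) * (2 * pi))
      \<le> exp (lam * (rho powr beta - t powr beta)) * L / (Re z / 2 * (2 * pi))"
    using K L R by (intro frac_le mult_right_mono) auto
  then show ?thesis by (simp add: field_simps)
qed

lemma norm_contour_kernel_1:
  assumes "0 < t" "0 \<le> Re z"
  shows "cmod (contour_kernel lam 1 t z) = exp (lam * (Re z - t)) * (4 * t\<^sup>2 / (cmod (z + of_real t))\<^sup>2)"
  using norm_contour_kernel[OF assms, of lam 1] assms by simp

lemma norm_cauchy_weight_side_le:
  fixes t lam Y L :: real
  assumes t: "0 < t" and lam: "0 \<le> lam" and Y: "Y = 8 * t * exp lam"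
    and z: "0 \<le> Re z" "Y\<^sup>2 / 2 \<le> (cmod z)\<^sup>2" and L: "0 \<le> L" "L \<le> 2 * Y"
  shows "cmod (contour_kernel lam 1 t z) * L / (cmod (z - of_real t) * (2 * pi))
    \<le> exp (- lam * t) / (4 * pi * exp (2 * lam)) * exp (lam * Re z)"
proof -
  have "8 * t * 1 \<le> Y"
    unfolding Y using t lam by (intro mult_left_mono) auto
  then have Y_pos: "0 < Y" and t_Y: "8 * t \<le> Y" using t by auto
  have "(7 / 10 * Y)\<^sup>2 = 49 / 100 * Y\<^sup>2" by (simp add: power2_eq_square)
  then have "(7 / 10 * Y)\<^sup>2 \<le> (cmod z)\<^sup>2"
    using z(2) zero_le_power2[of Y] by linarith
  then have "7 / 10 * Y \<le> cmod z"
    using Y_pos by (simp add: power2_le_iff_abs_le)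
  then have z_t: "Y / 2 \<le> cmod (z - of_real t)"
    using norm_triangle_sub[of z "of_real t"] t_Y t by simp
  have "Y\<^sup>2 / 2 \<le> (Re z)\<^sup>2 + (Im z)\<^sup>2" using z(2) by (simp add: cmod_power2)
  also have "\<dots> \<le> (cmod (z + of_real t))\<^sup>2"
    using z(1) t by (simp add: cmod_power2 power_mono)
  finally have z_plus_t: "Y\<^sup>2 / 2 \<le> (cmod (z + of_real t))\<^sup>2" .
  then have "4 * t\<^sup>2 / (cmod (z + of_real t))\<^sup>2 \<le> 4 * t\<^sup>2 / (Y\<^sup>2 / 2)"
    using Y_pos by (intro divide_left_mono mult_pos_pos) auto
  then have "cmod (contour_kernel lam 1 t z) * L / (cmod (z - of_real t) * (2 * pi))
      \<le> exp (lam * (Re z - t)) * (4 * t\<^sup>2 / (Y\<^sup>2 / 2)) * (2 * Y) / ((Y / 2) * (2 * pi))"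
    unfolding norm_contour_kernel_1[OF t z(1)] using Y_pos L z_t z_plus_t
    by (intro frac_le mult_mono mult_left_mono) auto
  also have "\<dots> = exp (lam * (Re z - t)) * (16 * t\<^sup>2 / (pi * Y\<^sup>2))"
    using Y_pos by (simp add: field_simps power2_eq_square)
  also have "Y\<^sup>2 = 64 * t\<^sup>2 * exp (2 * lam)"
    by (simp add: Y power_mult_distrib flip: exp_of_nat_mult)
  also have "exp (lam * (Re z - t)) * (16 * t\<^sup>2 / (pi * (64 * t\<^sup>2 * exp (2 * lam))))
      = exp (- lam * t) / (4 * pi * exp (2 * lam)) * exp (lam * Re z)"
    using t by (simp add: right_diff_distrib exp_diff exp_minus field_simps power2_eq_square)
  finally show ?thesis .
qed

lemma rcis_in_sector:
  assumes "0 \<le> u" "0 < rho" "\<bar>phi\<bar> \<le> \<alpha> * pi / 2" "\<alpha> * pi / 2 < pi" "0 < \<alpha>"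
  shows "of_real u * rcis rho phi \<in> sector \<alpha>"
proof (cases "u = 0")
  case False
  have "\<bar>phi\<bar> < pi" using assms(3,4) by linarith
  then have "phi \<in> {-pi<..pi}" by (auto simp: abs_less_iff)
  then have "Arg (rcis rho phi) = phi" by (rule Arg_rcis) (use assms in auto)
  then show ?thesis using assms False by (simp add: sector_def)
qed (use assms in \<open>simp add: sector_def Arg_zero\<close>)

lemma in_sector_1: "0 \<le> Re z \<Longrightarrow> z \<in> sector 1"
  using Arg_Re_nonneg[of z] by (simp add: sector_def)

lemma exp_neg_powr_le:
  fixes lam \<alpha> t :: real
  assumes "0 < lam" "0 < \<alpha>" "\<alpha> \<le> 1" "0 \<le> t"
  shows "exp (- lam * t powr (1/\<alpha>)) \<le> exp (1 - lam powr \<alpha> * t)"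
proof -
  define x where "x = lam powr \<alpha> * t"
  have x: "0 \<le> x" "x powr (1/\<alpha>) = lam * t powr (1/\<alpha>)"
    using assms by (simp_all add: x_def powr_mult powr_powr)
  have "- (lam * t powr (1/\<alpha>)) \<le> 1 - x"
  proof (cases "x \<le> 1")
    case True
    have "0 \<le> lam * t powr (1/\<alpha>)" using assms by simp
    then show ?thesis using True by linarith
  next
    case False
    then have "x powr 1 \<le> x powr (1/\<alpha>)" using assms by (intro powr_mono) (auto simp: field_simps)
    then show ?thesis using False x by simp
  qed
  then show ?thesis by (simp add: x_def)
qed

lemma has_integral_exp_affine:
  fixes c T :: real
  assumes "0 < c" "0 \<le> T"
  shows "((\<lambda>t. exp (1 - c * t)) has_integral ((exp 1 - exp (1 - c * T)) / c)) {0..T}"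
proof -
  have "((\<lambda>t. exp (1 - c * t)) has_integral (- exp (1 - c * T) / c - - exp (1 - c * 0) / c)) {0..T}"
  proof (rule fundamental_theorem_of_calculus)
    fix x :: real
    have "((\<lambda>t. - exp (1 - c * t) / c) has_real_derivative exp (1 - c * x)) (at x within {0..T})"
      using assms by (auto intro!: derivative_eq_intros)
    then show "((\<lambda>t. - exp (1 - c * t) / c) has_vector_derivative exp (1 - c * x)) (at x within {0..T})"
      by (simp add: has_real_derivative_iff_has_vector_derivative)
  qed (use assms in simp)
  then show ?thesis by (simp add: diff_divide_distrib)
qed

locale sectorial_heat =
  fixes J :: "'a::banach \<Rightarrow> 'a" and p \<alpha> M :: real
  assumes complex_structure: "complex_structure J"
    and p_gt_1: "1 < p"
    and alpha_pos: "0 < \<alpha>" and alpha_le_1: "\<alpha> \<le> 1"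
    and M_ge_1: "1 \<le> M"
begin

definition sector_bounded :: "nat \<Rightarrow> (nat set \<Rightarrow> 'a) \<Rightarrow> bool" where
  "sector_bounded n g \<longleftrightarrow> (\<forall>z\<in>sector \<alpha>. lpnorm p n (heat J n z g) \<le> M * lpnorm p n g)"

text \<open>Right of \<open>\<pi> cot (\<alpha>\<pi>/2)\<close>, vertical segments \<open>\<bar>Im z\<bar> \<le> \<pi>\<close> lie in the sector; the extra \<open>1\<close> makes the
  abscissa positive also for \<open>\<alpha> = 1\<close>.\<close>

definition abscissa :: real where
  "abscissa = pi * cot (\<alpha> * pi / 2) + 1"

lemma abscissa_ge_1: "1 \<le> abscissa"
proof -
  have "0 < \<alpha> * pi / 2" "\<alpha> * pi / 2 \<le> pi / 2"
    using alpha_pos alpha_le_1 by (auto simp: field_simps)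
  then have "0 \<le> cos (\<alpha> * pi / 2)" "0 < sin (\<alpha> * pi / 2)"
    by (intro cos_ge_zero sin_gt_zero; linarith)+
  then have "0 \<le> cot (\<alpha> * pi / 2)"
    by (simp add: cot_def)
  then show ?thesis by (simp add: abscissa_def)
qed

lemma sector_boundedD: "sector_bounded n g \<Longrightarrow> z \<in> sector \<alpha> \<Longrightarrow> lpnorm p n (heat J n z g) \<le> M * lpnorm p n g"
  by (simp add: sector_bounded_def)

lemma level_bound:
  assumes g: "sector_bounded n g" and k: "k \<le> n"
  shows "lpnorm p n (level n g k) \<le> exp (abscissa * real k) * M * lpnorm p n g"
proof -
  define N where "N = 2 * n + 1"
  define F where
    "F j A = cmult J (exp (level_node n abscissa j * of_nat k)) (heat J n (level_node n abscissa j) g A)" for j A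
  have N: "0 < real N" by (simp add: N_def)
  have "level n g k = (\<lambda>A. (1 / real N) *\<^sub>R (\<Sum>j<N. F j A))"
    unfolding F_def N_def by (rule ext, rule level_eq_average_heat[OF complex_structure k])
  then have "lpnorm p n (level n g k) \<le> (1 / real N) * (\<Sum>j<N. lpnorm p n (F j))"
    using lpnorm_sum[OF p_gt_1, of n F "{..<N}"] p_gt_1 by (simp add: lpnorm_scaleR divide_right_mono)
  also have "\<dots> \<le> (1 / real N) * (\<Sum>j<N. exp (abscissa * real k) * (M * lpnorm p n g))"
  proof (intro mult_left_mono sum_mono)
    fix j assume "j \<in> {..<N}"
    then have "level_node n abscissa j \<in> sector \<alpha>"
      using alpha_pos alpha_le_1 abscissa_ge_1 by (intro level_node_in_sector) (auto simp: N_def abscissa_def)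
    then show "lpnorm p n (F j) \<le> exp (abscissa * real k) * (M * lpnorm p n g)"
      unfolding F_def using complex_structure p_gt_1 sector_boundedD[OF g]
      by (simp add: lpnorm_cmult norm_exp_eq_Re level_node_def)
  qed simp
  also have "\<dots> = exp (abscissa * real k) * M * lpnorm p n g" using N by simp
  finally show ?thesis .
qed

text \<open>Only the levels \<open>k > d\<close> contribute, and \<open>level_bound\<close> controls each of them.\<close>

lemma heat_decay:
  assumes g: "sector_bounded n g" and tail: "tail_space n d g" and z: "abscissa + 1 \<le> Re z"
  shows "lpnorm p n (heat J n z g) \<le> 2 * M * lpnorm p n g * exp (- (Re z - abscissa) * real (d + 1))"
proof -
  define q where "q = exp (- (Re z - abscissa))"
  have q: "0 \<le> q" "2 * q \<le> 1"
  proof -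
    have "q \<le> exp (-1)" using z by (simp add: q_def)
    moreover have "2 * exp (-1::real) \<le> 1"
      using exp_ge_add_one_self[of 1] by (simp add: exp_minus field_simps)
    ultimately show "2 * q \<le> 1" by simp
  qed (simp add: q_def)
  have "heat J n z g = (\<lambda>A. \<Sum>k\<le>n. cmult J (exp (- z * of_nat k)) (level n g k A))"
    by (simp add: heat_eq_sum_levels[OF complex_structure] fun_eq_iff)
  then have "lpnorm p n (heat J n z g) \<le> (\<Sum>k\<le>n. lpnorm p n (\<lambda>A. cmult J (exp (- z * of_nat k)) (level n g k A)))"
    using lpnorm_sum[OF p_gt_1] by simp
  also have "\<dots> = (\<Sum>k\<le>n. exp (- Re z * real k) * lpnorm p n (level n g k))"
    using p_gt_1 by (simp add: lpnorm_cmult[OF complex_structure] norm_exp_eq_Re)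
  also have "\<dots> = (\<Sum>k=Suc d..n. exp (- Re z * real k) * lpnorm p n (level n g k))"
  proof (intro sum.mono_neutral_right ballI)
    fix k assume "k \<in> {..n} - {Suc d..n}"
    then have "level n g k = (\<lambda>A. 0)"
      using level_eq_0_if_tail[OF tail] by (auto simp: fun_eq_iff)
    then show "exp (- Re z * real k) * lpnorm p n (level n g k) = 0"
      using p_gt_1 by (simp add: lpnorm_zero)
  qed auto
  also have "\<dots> \<le> (\<Sum>k=Suc d..n. M * lpnorm p n g * q ^ k)"
  proof (intro sum_mono)
    fix k assume "k \<in> {Suc d..n}"
    then have "exp (- Re z * real k) * lpnorm p n (level n g k)
        \<le> exp (- Re z * real k) * (exp (abscissa * real k) * M * lpnorm p n g)"
      using level_bound[OF g] by (intro mult_left_mono) auto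
    also have "\<dots> = M * lpnorm p n g * q ^ k"
      by (simp add: q_def algebra_simps flip: exp_add exp_of_nat_mult)
    finally show "exp (- Re z * real k) * lpnorm p n (level n g k) \<le> M * lpnorm p n g * q ^ k" .
  qed
  also have "\<dots> \<le> M * lpnorm p n g * (2 * q ^ Suc d)"
    unfolding sum_distrib_left[symmetric] using M_ge_1
    by (intro mult_left_mono sum_power_tail_le[OF q]) (simp add: lpnorm_nonneg)
  also have "q ^ Suc d = exp (- (Re z - abscissa) * real (d + 1))"
    by (simp add: q_def mult.commute distrib_right flip: exp_of_nat_mult exp_add)
  finally show ?thesis by simp
qed

text \<open>The time horizon is chosen so that \<open>heat_decay\<close> halves the norm of every tail function at
  \<open>z = horizon\<close>.\<close>

definition horizon :: real where
  "horizon = abscissa + 1 + ln (4 * M)"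

lemma horizon_ge: "abscissa + 1 \<le> horizon"
  using M_ge_1 by (simp add: horizon_def)

lemma ray_edge_bound:
  assumes g: "sector_bounded n g" and a: "\<alpha> < 1" and t: "0 < t" and u: "0 \<le> u" and rho: "0 < rho"
    and phi: "phi = \<alpha> * pi / 2 \<or> phi = - (\<alpha> * pi / 2)"
  defines "z \<equiv> of_real u * rcis rho phi"
  shows "cmod (contour_kernel lam (1/\<alpha>) t z) * rho / (cmod (z - of_real t) * (2 * pi)) * lpnorm p n (heat J n z g)
    \<le> M * lpnorm p n g * exp (- lam * t powr (1/\<alpha>)) * (2 / (pi * sin (\<alpha> * pi / 2))) * (t * rho / (u\<^sup>2 * rho\<^sup>2 + t\<^sup>2))"
proof -
  have th: "0 < \<alpha> * pi / 2" "\<alpha> * pi / 2 < pi / 2" using alpha_pos a by auto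
  have "cmod (contour_kernel lam (1/\<alpha>) t z) * rho / (cmod (z - of_real t) * (2 * pi))
      \<le> exp (- lam * t powr (1/\<alpha>)) * (2 / (pi * sin (\<alpha> * pi / 2))) * (t * rho / (u\<^sup>2 * rho\<^sup>2 + t\<^sup>2))"
    unfolding z_def by (rule norm_cauchy_weight_on_ray_le[OF t u rho phi th]) (use alpha_pos in simp)
  moreover have "\<bar>phi\<bar> \<le> \<alpha> * pi / 2" using phi th by auto
  then have "lpnorm p n (heat J n z g) \<le> M * lpnorm p n g"
    unfolding z_def using th alpha_pos u rho
    by (intro sector_boundedD[OF g] rcis_in_sector) auto
  ultimately have "cmod (contour_kernel lam (1/\<alpha>) t z) * rho / (cmod (z - of_real t) * (2 * pi)) * lpnorm p n (heat J n z g)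
    \<le> exp (- lam * t powr (1/\<alpha>)) * (2 / (pi * sin (\<alpha> * pi / 2))) * (t * rho / (u\<^sup>2 * rho\<^sup>2 + t\<^sup>2))
      * (M * lpnorm p n g)"
    using sin_gt_zero[of "\<alpha> * pi / 2"] th t rho by (intro mult_mono) (auto simp: lpnorm_nonneg)
  then show ?thesis by (simp add: mult_ac)
qed

lemma far_edge_bound:
  assumes g: "sector_bounded n g" and tail: "tail_space n d g"
    and t: "0 < t" "2 * t \<le> R" and R: "abscissa + 1 \<le> R"
    and bc: "Re b = R" "Re c = R" "cmod b \<le> rho" "cmod c \<le> rho" and s: "s \<in> {0..1}"
    and beta: "0 < beta" and lam: "0 \<le> lam" "lam * rho powr beta \<le> real (d + 1) / 2"
  defines "z \<equiv> linepath b c s"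
  shows "cmod (cauchy_edge (contour_kernel lam beta t) t b c s) * lpnorm p n (heat J n z g)
    \<le> M * lpnorm p n g * exp (- lam * t powr beta) * (2 * cmod (c - b) / (pi * R))"
proof -
  have z: "Re z = R" "cmod z \<le> rho"
    using bc s closed_segment_subset[of b "cball 0 rho" c] linepath_in_path[OF s, of b c]
    by (auto simp: z_def linepath_def algebra_simps)
  have heat: "lpnorm p n (heat J n z g) \<le> 2 * M * lpnorm p n g * exp (- (R - abscissa) * real (d + 1))"
    using heat_decay[OF g tail, of z] z(1) R by simp
  have R: "0 < R" "1 \<le> R - abscissa" using R abscissa_ge_1 by auto
  have "lam * rho powr beta - (R - abscissa) * real (d + 1) \<le> 0"
    using lam(2) mult_right_mono[OF R(2), of "real (d + 1)"] by linarith
  then have exp_le: "exp (lam * (rho powr beta - t powr beta)) * exp (- (R - abscissa) * real (d + 1))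
      \<le> exp (- lam * t powr beta)"
    by (simp add: algebra_simps flip: exp_add)
  have "cmod (cauchy_edge (contour_kernel lam beta t) t b c s) * lpnorm p n (heat J n z g)
      \<le> (exp (lam * (rho powr beta - t powr beta)) * (cmod (c - b) / (pi * R)))
        * (2 * M * lpnorm p n g * exp (- (R - abscissa) * real (d + 1)))"
    using norm_cauchy_weight_far_le[of t z rho beta lam "cmod (c - b)"] z t R beta lam heat
    by (intro mult_mono) (auto simp: norm_cauchy_edge z_def lpnorm_nonneg)
  also have "\<dots> \<le> M * lpnorm p n g * exp (- lam * t powr beta) * (2 * cmod (c - b) / (pi * R))"
    using exp_le M_ge_1 R by (simp add: field_simps lpnorm_nonneg mult_left_mono)
  finally show ?thesis .
qed

subsection \<open>The case \<open>\<alpha> < 1\<close>\<close>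

text \<open>For \<open>\<alpha> < 1\<close> the contour is the triangle with vertices \<open>0\<close> and \<open>\<rho> e\<^sup>\<plusminus>\<^sup>i\<^sup>\<theta>\<close>, \<open>\<theta> = \<alpha>\<pi>/2\<close>,
  \<open>\<rho> cos \<theta> = R\<close>: its two sides along the boundary rays of the sector carry the factor
  \<open>exp (- \<lambda> t powr (1/\<alpha>))\<close>, and on its far side \<open>heat_decay\<close> beats the growth of the kernel.\<close>

lemma heat_bound_triangle_alpha_lt_1:
  assumes a: "\<alpha> < 1" and g: "sector_bounded n g" and tail: "tail_space n d g"
    and t: "0 < t" "2 * t \<le> R" and R: "abscissa + 1 \<le> R"
    and lam: "0 \<le> lam" "lam * (R / cos (\<alpha> * pi / 2)) powr (1/\<alpha>) = real (d + 1) / 2"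
  defines "th \<equiv> \<alpha> * pi / 2"
  shows "lpnorm p n (heat J n t g)
    \<le> (2 / sin th + 4 * sin th / (pi * cos th)) * M * lpnorm p n g * exp (- lam * t powr (1/\<alpha>))"
proof -
  define rho where "rho = R / cos th"
  define Y where "Y = rho * sin th"
  define G where "G = M * lpnorm p n g * exp (- lam * t powr (1/\<alpha>))"
  define K where "K = contour_kernel lam (1/\<alpha>) t"
  define b where "b = rcis rho (- th)"
  define c where "c = rcis rho th"
  have th: "0 < th" "th < pi / 2" using alpha_pos a by (auto simp: th_def)
  have s0: "0 < sin th" and c0: "0 < cos th" using th by (auto intro: sin_gt_zero cos_gt_zero)
  have rho: "0 < rho" "rho * cos th = R" using R abscissa_ge_1 c0 by (auto simp: rho_def)
  have Y: "0 < Y" using rho s0 by (simp add: Y_def)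
  have bc: "Re b = R" "Im b = - Y" "Re c = R" "Im c = Y" "cmod b = rho" "cmod c = rho"
    using rho by (auto simp: b_def c_def Y_def)
  have G: "0 \<le> G" using M_ge_1 by (simp add: G_def lpnorm_nonneg)
  define I where "I = G * (2 / (pi * sin th)) * arctan (rho / t)"
  have E1: "((\<lambda>s. G * (2 / (pi * sin th)) * (t * rho / (s\<^sup>2 * rho\<^sup>2 + t\<^sup>2))) has_integral I) {0..1}"
    unfolding I_def by (intro has_integral_mult_right has_integral_arctan_ray t rho)
  have E3: "((\<lambda>s. G * (2 / (pi * sin th)) * (t * rho / ((1 - s)\<^sup>2 * rho\<^sup>2 + t\<^sup>2))) has_integral I) {0..1}"
    unfolding I_def by (intro has_integral_mult_right has_integral_arctan_ray_reflected t rho)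
  have "lpnorm p n (heat J n t g) \<le> I + G * (4 * Y / (pi * R)) + I"
  proof (rule lpnorm_heat_le_triangle[OF complex_structure p_gt_1 _ t(1), where a=0 and b=b and c=c and K=K])
    show "ccw_around 0 b c (of_real t)"
      using bc t Y by (simp add: ccw_around_def algebra_simps)
    show "cmod (cauchy_edge K t 0 b s) * lpnorm p n (heat J n (linepath 0 b s) g)
        \<le> G * (2 / (pi * sin th)) * (t * rho / (s\<^sup>2 * rho\<^sup>2 + t\<^sup>2))" if "s \<in> {0..1}" for s
      using ray_edge_bound[OF g a t(1) _ rho(1), of s "- th" lam] that rho
      by (simp add: norm_cauchy_edge scaleR_conv_of_real K_def b_def G_def th_def mult_ac)
    show "cmod (cauchy_edge K t c 0 s) * lpnorm p n (heat J n (linepath c 0 s) g)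
        \<le> G * (2 / (pi * sin th)) * (t * rho / ((1 - s)\<^sup>2 * rho\<^sup>2 + t\<^sup>2))" if "s \<in> {0..1}" for s
    proof -
      have "linepath c 0 s = of_real (1 - s) * c" by (simp add: linepath_def scaleR_conv_of_real)
      then show ?thesis
        using ray_edge_bound[OF g a t(1) _ rho(1), of "1 - s" th lam] that rho
        by (simp add: norm_cauchy_edge norm_minus_commute[of 0] K_def c_def G_def th_def mult_ac)
    qed
    show "cmod (cauchy_edge K t b c s) * lpnorm p n (heat J n (linepath b c s) g) \<le> G * (4 * Y / (pi * R))"
      if "s \<in> {0..1}" for s
    proof -
      have "cmod (c - b) = 2 * Y"
        using bc Y by (auto simp: cmod_def complex_eq_iff real_sqrt_mult)
      moreover have "lam * rho powr (1/\<alpha>) \<le> real (d + 1) / 2"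
        using lam(2) by (simp add: rho_def th_def)
      ultimately show ?thesis
        using far_edge_bound[OF g tail t R _ _ _ _ that _ lam(1), of b c rho] bc alpha_pos
        by (simp add: K_def G_def mult_ac)
    qed
  qed (use E1 E3 has_integral_const_real[of "G * (4 * Y / (pi * R))" 0 1] bc R abscissa_ge_1 t alpha_pos in
      \<open>auto simp: K_def intro: continuous_on_contour_kernel
      holomorphic_contour_kernel contour_kernel_at_t\<close>)
  also have "\<dots> \<le> G / sin th + G * (4 * sin th / (pi * cos th)) + G / sin th"
  proof -
    have "I \<le> G / sin th"
      using arctan_ubound[of "rho / t"] G s0 mult_left_mono[of "arctan (rho / t)" "pi / 2" "G * (2 / (pi * sin th))"]
      by (simp add: I_def field_simps)
    moreover have "G * (4 * Y / (pi * R)) = G * (4 * sin th / (pi * cos th))"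
      using rho c0 by (simp add: Y_def flip: rho(2))
    ultimately show ?thesis by linarith
  qed
  finally show ?thesis by (simp add: G_def field_simps)
qed

lemma heat_bound_alpha_lt_1:
  assumes a: "\<alpha> < 1"
  obtains C \<kappa> where "1 \<le> C" "0 < \<kappa>"
    "\<And>n g d t. sector_bounded n g \<Longrightarrow> tail_space n d g \<Longrightarrow> 0 < t \<Longrightarrow> t \<le> horizon \<Longrightarrow>
       lpnorm p n (heat J n t g) \<le> C * M * lpnorm p n g * exp (- \<kappa> * real (d + 1) * t powr (1/\<alpha>))"
proof
  define th where "th = \<alpha> * pi / 2"
  have th: "0 < sin th" "sin th \<le> 1" "0 < cos th"
    using alpha_pos a by (auto simp: th_def intro!: sin_gt_zero cos_gt_zero)
  have "2 / 1 \<le> 2 / sin th" using th by (intro divide_left_mono) auto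
  moreover have "0 \<le> 4 * sin th / (pi * cos th)" using th by simp
  ultimately
  show "1 \<le> 2 / sin th + 4 * sin th / (pi * cos th)" by linarith
  define rho where "rho = 2 * horizon / cos th"
  have rho: "0 < rho" using th horizon_ge abscissa_ge_1 by (simp add: rho_def)
  show "0 < 1 / (2 * rho powr (1/\<alpha>))" using rho by simp
  fix n g d t assume "sector_bounded n g" "tail_space n d g" "0 < t" "t \<le> horizon"
  then show "lpnorm p n (heat J n t g) \<le> (2 / sin th + 4 * sin th / (pi * cos th)) * M * lpnorm p n g
      * exp (- (1 / (2 * rho powr (1/\<alpha>))) * real (d + 1) * t powr (1/\<alpha>))"
    using heat_bound_triangle_alpha_lt_1[OF a, of n g d t "2 * horizon" "real (d + 1) / (2 * rho powr (1/\<alpha>))"]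
      rho horizon_ge th[unfolded th_def] by (simp add: th_def rho_def mult_ac)
qed

subsection \<open>The case \<open>\<alpha> = 1\<close>\<close>

lemma abscissa_alpha_1: "\<alpha> = 1 \<Longrightarrow> abscissa = 1"
  unfolding abscissa_def by (simp add: cot_def)

lemma heat_bound_right_half_plane:
  assumes a: "\<alpha> = 1" and g: "sector_bounded n g" and tail: "tail_space n d g" and z: "0 \<le> Re z"
  shows "exp (real (d + 1) / 2 * Re z) * lpnorm p n (heat J n z g) \<le> 2 * exp (real (d + 1)) * (M * lpnorm p n g)"
proof (cases "2 \<le> Re z")
  case True
  have "lpnorm p n (heat J n z g) \<le> 2 * M * lpnorm p n g * exp (- (Re z - 1) * real (d + 1))"
    using heat_decay[OF g tail, of z] True abscissa_alpha_1[OF a] by simp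
  then have "exp (real (d + 1) / 2 * Re z) * lpnorm p n (heat J n z g)
      \<le> exp (real (d + 1) / 2 * Re z) * (2 * M * lpnorm p n g * exp (- (Re z - 1) * real (d + 1)))"
    by (rule mult_left_mono) simp
  also have "\<dots> = 2 * M * lpnorm p n g * exp (real (d + 1) * (1 - Re z / 2))"
    by (simp add: algebra_simps flip: exp_add)
  also have "\<dots> \<le> 2 * M * lpnorm p n g * exp (real (d + 1))"
    using True M_ge_1 by (intro mult_left_mono) (auto simp: lpnorm_nonneg mult_nonneg_nonpos)
  finally show ?thesis by (simp add: mult_ac)
next
  case False
  have heat_le: "lpnorm p n (heat J n z g) \<le> M * lpnorm p n g"
    using sector_boundedD[OF g] in_sector_1[OF z] a by simp
  have "real (d + 1) / 2 * Re z \<le> real (d + 1) / 2 * 2"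
    using False by (intro mult_left_mono) auto
  then have exp_le: "exp (real (d + 1) / 2 * Re z) \<le> exp (real (d + 1))"
    by simp
  have "exp (real (d + 1) / 2 * Re z) * lpnorm p n (heat J n z g) \<le> exp (real (d + 1)) * (M * lpnorm p n g)"
    by (rule mult_mono[OF exp_le heat_le]) (simp_all add: lpnorm_nonneg)
  also have "\<dots> \<le> 2 * exp (real (d + 1)) * (M * lpnorm p n g)"
    using M_ge_1 by (simp add: lpnorm_nonneg)
  finally show ?thesis .
qed

text \<open>For \<open>\<alpha> = 1\<close> the contour is the triangle with vertices \<open>-iY\<close>, \<open>Y\<close>, \<open>iY\<close>,
  \<open>Y = 8 t exp \<lambda>\<close>: on the imaginary axis the kernel carries the factor \<open>exp (- \<lambda> t)\<close>, on the other
  two sides the large distance from \<open>t\<close> compensates for the growth of the kernel.\<close>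

lemma far_side_bound_alpha_1:
  assumes a: "\<alpha> = 1" and g: "sector_bounded n g" and tail: "tail_space n d g"
    and t: "0 < t" and Y: "Y = 8 * t * exp (real (d + 1) / 2)"
    and z: "0 \<le> Re z" "Y\<^sup>2 / 2 \<le> (cmod z)\<^sup>2" and L: "0 \<le> L" "L \<le> 2 * Y"
  shows "cmod (contour_kernel (real (d + 1) / 2) 1 t z) * L / (cmod (z - of_real t) * (2 * pi))
      * lpnorm p n (heat J n z g) \<le> M * lpnorm p n g * exp (- (real (d + 1) / 2) * t)"
proof -
  define lam where "lam = real (d + 1) / 2"
  have two_lam: "2 * lam = real (d + 1)" by (simp add: lam_def)
  have "cmod (contour_kernel lam 1 t z) * L / (cmod (z - of_real t) * (2 * pi)) * lpnorm p n (heat J n z g)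
      \<le> exp (- lam * t) / (4 * pi * exp (2 * lam)) * exp (lam * Re z) * lpnorm p n (heat J n z g)"
    by (rule mult_right_mono[OF norm_cauchy_weight_side_le[OF t _ Y[folded lam_def] z L]])
      (simp_all add: lam_def lpnorm_nonneg)
  also have "\<dots> = exp (- lam * t) / (4 * pi * exp (2 * lam)) * (exp (lam * Re z) * lpnorm p n (heat J n z g))"
    by (simp only: mult.assoc)
  also have "\<dots> \<le> exp (- lam * t) / (4 * pi * exp (2 * lam)) * (2 * exp (2 * lam) * (M * lpnorm p n g))"
    using heat_bound_right_half_plane[OF a g tail z(1)] unfolding two_lam
    by (intro mult_left_mono) (simp_all add: lam_def)
  also have "\<dots> = M * lpnorm p n g * exp (- lam * t) / (2 * pi)"
    by (simp add: field_simps)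
  also have "\<dots> \<le> M * lpnorm p n g * exp (- lam * t)"
    using pi_ge_two M_ge_1 by (simp add: divide_le_eq mult_le_cancel_left1 not_less lpnorm_nonneg)
  finally show ?thesis by (simp add: lam_def)
qed

lemma imaginary_axis_bound_alpha_1:
  assumes a: "\<alpha> = 1" and g: "sector_bounded n g" and t: "0 < t" and Y: "0 < Y" and z: "Re z = 0"
  shows "cmod (contour_kernel lam 1 t z) * (2 * Y) / (cmod (z - of_real t) * (2 * pi)) * lpnorm p n (heat J n z g)
    \<le> M * lpnorm p n g * exp (- lam * t) * (4 / pi) * (t * Y / (cmod (z + of_real t))\<^sup>2)"
proof -
  have z_plus_t: "0 < (cmod (z + of_real t))\<^sup>2"
    using t z by (simp add: cmod_power2 add_pos_nonneg)
  have "t \<le> cmod (z - of_real t)"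
    using abs_Re_le_cmod[of "z - of_real t"] z t by simp
  then have "cmod (contour_kernel lam 1 t z) * (2 * Y) / (cmod (z - of_real t) * (2 * pi))
      \<le> cmod (contour_kernel lam 1 t z) * (2 * Y) / (t * (2 * pi))"
    using t Y by (intro divide_left_mono mult_right_mono mult_pos_pos) auto
  also have "\<dots> = exp (- lam * t) * (4 / pi) * (t * Y / (cmod (z + of_real t))\<^sup>2)"
    using t z_plus_t by (simp add: norm_contour_kernel_1 z field_simps power2_eq_square)
  finally have "cmod (contour_kernel lam 1 t z) * (2 * Y) / (cmod (z - of_real t) * (2 * pi)) * lpnorm p n (heat J n z g)
      \<le> exp (- lam * t) * (4 / pi) * (t * Y / (cmod (z + of_real t))\<^sup>2) * (M * lpnorm p n g)"
    using sector_boundedD[OF g, of z] in_sector_1[of z] a z t Y z_plus_t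
    by (intro mult_mono) (auto simp: lpnorm_nonneg)
  then show ?thesis by (simp add: mult_ac)
qed

lemma side_edge_bound_alpha_1:
  assumes a: "\<alpha> = 1" and g: "sector_bounded n g" and tail: "tail_space n d g" and t: "0 < t"
    and Y: "Y = 8 * t * exp (real (d + 1) / 2)"
    and z: "linepath u v s = Complex (s * Y) (- ((1 - s) * Y)) \<or> linepath u v s = Complex ((1 - s) * Y) (s * Y)"
    and uv: "cmod (v - u) \<le> 2 * Y" and s: "s \<in> {0..1}"
  shows "cmod (cauchy_edge (contour_kernel (real (d + 1) / 2) 1 t) t u v s) * lpnorm p n (heat J n (linepath u v s) g)
    \<le> M * lpnorm p n g * exp (- (real (d + 1) / 2) * t)"
proof -
  have "0 < Y" using t by (simp add: Y)
  have "Y\<^sup>2 / 2 \<le> (s * Y)\<^sup>2 + ((1 - s) * Y)\<^sup>2"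
    using zero_le_power2[of "(s - 1/2) * Y"] by (simp add: power2_eq_square algebra_simps)
  then have "0 \<le> Re (linepath u v s)" "Y\<^sup>2 / 2 \<le> (cmod (linepath u v s))\<^sup>2"
    using z s \<open>0 < Y\<close> by (auto simp: cmod_power2 add.commute)
  then show ?thesis
    using far_side_bound_alpha_1[OF a g tail t Y, of "linepath u v s" "cmod (v - u)"] uv
    by (simp add: norm_cauchy_edge)
qed

lemma heat_bound_alpha_1:
  assumes a: "\<alpha> = 1" and g: "sector_bounded n g" and tail: "tail_space n d g" and t: "0 < t"
  shows "lpnorm p n (heat J n t g) \<le> 4 * M * lpnorm p n g * exp (- (1 / 2) * real (d + 1) * t powr (1/\<alpha>))"
proof -
  define lam where "lam = real (d + 1) / 2"
  define Y where "Y = 8 * t * exp lam"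
  define G where "G = M * lpnorm p n g * exp (- lam * t)"
  define K where "K = contour_kernel lam 1 t"
  define ca where "ca = Complex 0 (- Y)"
  define cb where "cb = Complex Y 0"
  define cc where "cc = Complex 0 Y"
  have "8 * t * 1 \<le> Y"
    unfolding Y_def using t by (intro mult_left_mono) (auto simp: lam_def)
  then have Y: "0 < Y" "t < Y" using t by auto
  have G: "0 \<le> G" using M_ge_1 by (simp add: G_def lpnorm_nonneg)
  note side = side_edge_bound_alpha_1[OF a g tail t Y_def[unfolded lam_def]]
  have E3: "((\<lambda>s. G * (4 / pi) * (t * Y / (t\<^sup>2 + Y\<^sup>2 * (1 - 2 * s)\<^sup>2))) has_integral
      G * (4 / pi) * arctan (Y / t)) {0..1}"
    by (intro has_integral_mult_right has_integral_arctan_segment t Y)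
  have "lpnorm p n (heat J n t g) \<le> G + G + G * (4 / pi) * arctan (Y / t)"
  proof (rule lpnorm_heat_le_triangle[OF complex_structure p_gt_1 _ t, where a=ca and b=cb and c=cc and K=K])
    show "ccw_around ca cb cc (of_real t)"
      using Y t by (simp add: ccw_around_def ca_def cb_def cc_def algebra_simps)
    show "cmod (cauchy_edge K t ca cb s) * lpnorm p n (heat J n (linepath ca cb s) g) \<le> G"
      if "s \<in> {0..1}" for s
      unfolding K_def G_def lam_def
      by (rule side[OF _ _ that]) (use Y cmod_le[of "cb - ca"] in
          \<open>simp_all add: linepath_def ca_def cb_def complex_eq_iff algebra_simps\<close>)
    show "cmod (cauchy_edge K t cb cc s) * lpnorm p n (heat J n (linepath cb cc s) g) \<le> G"
      if "s \<in> {0..1}" for s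
      unfolding K_def G_def lam_def
      by (rule side[OF _ _ that]) (use Y cmod_le[of "cc - cb"] in
          \<open>simp_all add: linepath_def cb_def cc_def complex_eq_iff algebra_simps\<close>)
    show "cmod (cauchy_edge K t cc ca s) * lpnorm p n (heat J n (linepath cc ca s) g)
        \<le> G * (4 / pi) * (t * Y / (t\<^sup>2 + Y\<^sup>2 * (1 - 2 * s)\<^sup>2))" for s
    proof -
      have z: "linepath cc ca s = Complex 0 ((1 - 2 * s) * Y)" "cmod (ca - cc) = 2 * Y"
        using Y by (auto simp: linepath_def ca_def cc_def complex_eq_iff algebra_simps cmod_def real_sqrt_mult)
      then show ?thesis
        using imaginary_axis_bound_alpha_1[OF a g t Y(1), of "linepath cc ca s" lam]
        by (simp add: norm_cauchy_edge K_def G_def cmod_power2 power_mult_distrib mult.commute)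
    qed
  qed (use t Y E3 has_integral_const_real[of G 0 1] in \<open>auto simp: K_def ca_def cb_def cc_def
      intro: continuous_on_contour_kernel holomorphic_contour_kernel contour_kernel_at_t\<close>)
  also have "\<dots> \<le> 4 * G"
    using arctan_ubound[of "Y / t"] G mult_left_mono[of "arctan (Y / t)" "pi / 2" "G * (4 / pi)"] by simp
  finally show ?thesis
    using a t by (simp add: G_def lam_def mult_ac)
qed

lemma heat_bound:
  obtains C \<kappa> where "1 \<le> C" "0 < \<kappa>"
    "\<And>n g d t. sector_bounded n g \<Longrightarrow> tail_space n d g \<Longrightarrow> 0 \<le> t \<Longrightarrow> t \<le> horizon \<Longrightarrow>
       lpnorm p n (heat J n t g) \<le> C * M * lpnorm p n g * exp (- \<kappa> * real (d + 1) * t powr (1/\<alpha>))"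
proof -
  obtain C \<kappa> where C: "1 \<le> C" "0 < \<kappa>" and pos: "\<And>n g d t. sector_bounded n g \<Longrightarrow> tail_space n d g \<Longrightarrow>
      0 < t \<Longrightarrow> t \<le> horizon \<Longrightarrow>
      lpnorm p n (heat J n t g) \<le> C * M * lpnorm p n g * exp (- \<kappa> * real (d + 1) * t powr (1/\<alpha>))"
  proof (cases "\<alpha> < 1")
    case True
    then show ?thesis using heat_bound_alpha_lt_1 that by blast
  next
    case False
    then have "\<alpha> = 1" using alpha_le_1 by simp
    then show ?thesis using heat_bound_alpha_1 that[of 4 "1/2"] by simp
  qed
  have zero: "lpnorm p n (heat J n 0 g) \<le> C * M * lpnorm p n g" for n g
  proof -
    have "lpnorm p n (heat J n 0 g) = 1 * lpnorm p n g"
      using lpnorm_cong[of n "heat J n 0 g" g p] by (simp add: heat_zero)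
    also have "\<dots> \<le> (C * M) * lpnorm p n g"
      using mult_mono[OF C(1) M_ge_1] C(1) by (intro mult_right_mono) (simp_all add: lpnorm_nonneg)
    finally show ?thesis by simp
  qed
  show ?thesis
  proof (rule that[OF C])
    fix n g d and t :: real
    assume g: "sector_bounded n g" and tail: "tail_space n d g" and t: "0 \<le> t" "t \<le> horizon"
    show "lpnorm p n (heat J n t g) \<le> C * M * lpnorm p n g * exp (- \<kappa> * real (d + 1) * t powr (1/\<alpha>))"
    proof (cases "t = 0")
      case True
      then show ?thesis using zero[of n g] by simp
    qed (use pos[OF g tail] t in auto)
  qed
qed

lemma heat_horizon_le_half:
  assumes "sector_bounded n f" "tail_space n d f"
  shows "lpnorm p n (heat J n horizon f) \<le> lpnorm p n f / 2"
proof -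
  have "lpnorm p n (heat J n horizon f) \<le> 2 * M * lpnorm p n f * exp (- (horizon - abscissa) * real (d + 1))"
    using heat_decay[OF assms, of "of_real horizon"] horizon_ge by simp
  also have "exp (- (horizon - abscissa) * real (d + 1)) \<le> exp (- (1 + ln (4 * M)))"
    unfolding exp_le_cancel_iff mult_minus_left neg_le_iff_le
    using mult_left_mono[of 1 "real (d + 1)" "1 + ln (4 * M)"] M_ge_1 by (simp add: horizon_def)
  also have "exp (- (1 + ln (4 * M))) = exp (- 1) / (4 * M)"
    using M_ge_1 by (simp add: exp_diff exp_minus)
  also have "\<dots> \<le> 1 / (4 * M)"
    using M_ge_1 by (intro divide_right_mono) auto
  finally show ?thesis
    using M_ge_1 by (simp add: lpnorm_nonneg mult_left_mono)
qed

lemma lpnorm_sub_heat_horizon_le: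
  assumes bound: "\<And>t. 0 \<le> t \<Longrightarrow> t \<le> horizon \<Longrightarrow>
      lpnorm p n (heat J n t (hDelta n f)) \<le> B * exp (- lam * t powr (1/\<alpha>))"
    and lam: "0 < lam" and B: "0 \<le> B"
  shows "lpnorm p n (\<lambda>A. f A - heat J n horizon f A) \<le> B * exp 1 / lam powr \<alpha>"
proof -
  have T: "0 \<le> horizon" using horizon_ge abscissa_ge_1 by simp
  have E: "((\<lambda>t. B * exp (1 - lam powr \<alpha> * t)) has_integral
      B * ((exp 1 - exp (1 - lam powr \<alpha> * horizon)) / lam powr \<alpha>)) {0..horizon}"
    using lam T by (intro has_integral_mult_right has_integral_exp_affine) auto
  have "lpnorm p n (\<lambda>A. f A - heat J n horizon f A) \<le> integral {0..horizon} (\<lambda>t. B * exp (1 - lam powr \<alpha> * t))"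
  proof (rule lpnorm_has_integral_le[OF p_gt_1 has_integral_heat_hDelta[OF _ T]])
    show "(\<lambda>t. norm (heat J n (of_real t) (hDelta n f) A)) integrable_on {0..horizon}" for A
      by (intro integrable_continuous_interval continuous_intros continuous_on_heat complex_structure)
    show "lpnorm p n (heat J n (of_real t) (hDelta n f)) \<le> B * exp (1 - lam powr \<alpha> * t)"
      if "t \<in> {0..horizon}" for t
      using bound[of t] exp_neg_powr_le[OF lam alpha_pos alpha_le_1, of t] that B
      by (auto intro: order.trans mult_left_mono)
  qed (use E in auto)
  also have "\<dots> \<le> B * exp 1 / lam powr \<alpha>"
    using integral_unique[OF E] lam B by (simp add: divide_right_mono mult_left_mono)
  finally show ?thesis .
qed

lemma tail_lower_bound:
  obtains c where "0 < c"
    "\<And>n d f. 0 < d \<Longrightarrow> tail_space n d f \<Longrightarrow> sector_bounded n f \<Longrightarrow> sector_bounded n (hDelta n f) \<Longrightarrow>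
       c * real d powr \<alpha> * lpnorm p n f \<le> lpnorm p n (hDelta n f)"
proof -
  obtain C \<kappa> where C: "1 \<le> C" "0 < \<kappa>" and bound: "\<And>n g d t. sector_bounded n g \<Longrightarrow> tail_space n d g \<Longrightarrow>
      0 \<le> t \<Longrightarrow> t \<le> horizon \<Longrightarrow>
      lpnorm p n (heat J n t g) \<le> C * M * lpnorm p n g * exp (- \<kappa> * real (d + 1) * t powr (1/\<alpha>))"
    using heat_bound by blast
  define B where "B = 2 * exp 1 * C * M"
  have B: "0 < B" using C M_ge_1 by (simp add: B_def)
  show ?thesis
  proof (rule that)
    show "0 < \<kappa> powr \<alpha> / B" using C B by simp
    fix n d and f :: "nat set \<Rightarrow> 'a"
    assume d: "0 < d" and tail: "tail_space n d f" and f: "sector_bounded n f" and g: "sector_bounded n (hDelta n f)"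
    define lam where "lam = \<kappa> * real (d + 1)"
    have lam: "0 < lam" using C by (simp add: lam_def)
    have "tail_space n d (hDelta n f)"
      using tail by (simp add: tail_space_def fourier_hDelta)
    then have "lpnorm p n (\<lambda>A. f A - heat J n horizon f A) \<le> C * M * lpnorm p n (hDelta n f) * exp 1 / lam powr \<alpha>"
      using bound[OF g] C M_ge_1 lam
      by (intro lpnorm_sub_heat_horizon_le) (auto simp: lam_def mult_ac lpnorm_nonneg)
    moreover have "lpnorm p n f \<le> lpnorm p n (\<lambda>A. f A - heat J n horizon f A) + lpnorm p n (heat J n horizon f)"
      using lpnorm_triangle[OF p_gt_1, of n "\<lambda>A. f A - heat J n horizon f A" "heat J n horizon f"] by simp
    ultimately have "lpnorm p n f \<le> 2 * (C * M * lpnorm p n (hDelta n f) * exp 1 / lam powr \<alpha>)"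
      using heat_horizon_le_half[OF f tail] by linarith
    then have "lam powr \<alpha> * lpnorm p n f \<le> B * lpnorm p n (hDelta n f)"
      using lam by (simp add: B_def field_simps)
    moreover have "(\<kappa> * real d) powr \<alpha> * lpnorm p n f \<le> lam powr \<alpha> * lpnorm p n f"
      using C alpha_pos by (intro mult_right_mono powr_mono2) (auto simp: lam_def lpnorm_nonneg)
    ultimately have "(\<kappa> * real d) powr \<alpha> * lpnorm p n f \<le> B * lpnorm p n (hDelta n f)"
      by linarith
    then show "\<kappa> powr \<alpha> / B * real d powr \<alpha> * lpnorm p n f \<le> lpnorm p n (hDelta n f)"
      using B C by (simp add: powr_mult field_simps)
  qed
qed

end

theorem mainTheorem1:
  fixes J :: "'a::banach \<Rightarrow> 'a" and p \<alpha> :: real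
  assumes "complex_structure J"
    and "K_convex TYPE('a)"
    and "1 < p"
    and "0 < \<alpha>" and "\<alpha> \<le> 1"
    and "\<exists>M. \<forall>n\<ge>1. \<forall>z\<in>sector \<alpha>. \<forall>f :: nat set \<Rightarrow> 'a.
            lpnorm p n (heat J n z f) \<le> M * lpnorm p n f"
  shows "\<exists>c>0. \<forall>n d (f :: nat set \<Rightarrow> 'a). d < n \<longrightarrow> tail_space n d f \<longrightarrow>
            lpnorm p n (hDelta n f) \<ge> c * real d powr \<alpha> * lpnorm p n f"
proof -
  obtain M where M: "\<And>n z f. 1 \<le> n \<Longrightarrow> z \<in> sector \<alpha> \<Longrightarrow> lpnorm p n (heat J n z f) \<le> M * lpnorm p n f"
    using assms(6) by blast
  interpret sectorial_heat J p \<alpha> "max M 1"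
    using assms by unfold_locales auto
  have bounded: "sector_bounded n f" if "1 \<le> n" for n and f :: "nat set \<Rightarrow> 'a"
    unfolding sector_bounded_def
    using M[OF that] mult_right_mono[OF max.cobounded1 lpnorm_nonneg] by (blast intro: order.trans)
  obtain c where c: "0 < c" and lower: "\<And>n d f. 0 < d \<Longrightarrow> tail_space n d f \<Longrightarrow> sector_bounded n f \<Longrightarrow>
      sector_bounded n (hDelta n f) \<Longrightarrow> c * real d powr \<alpha> * lpnorm p n f \<le> lpnorm p n (hDelta n f)"
    using tail_lower_bound by blast
  have "c * real d powr \<alpha> * lpnorm p n f \<le> lpnorm p n (hDelta n f)"
    if "d < n" "tail_space n d f" for n d and f :: "nat set \<Rightarrow> 'a"
    using lower[of d n f] that bounded[of n f] bounded[of n "hDelta n f"]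
    by (cases "d = 0") (auto simp: lpnorm_nonneg)
  then show ?thesis using c by blast
qed

end
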